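(* For $1\le i,j\le n-1$, the subspace $V^{ij}\subset V^i\otimes V^j$ is linearly spanned by the vectors $e_C^{ij}$, where $C$ ranges over the monogressive $ij$-effective orthocells.
   Context: $n\ge2$, $q\in\mathbb{C}^*$ not a root of unity. $G=\mathrm{SL}(n,\mathbb{C})$, $B$ upper triangular, $e_1,\dots,e_n$ standard basis, $G/B$ = full flags in $\mathbb{C}^n$. $S_n$ acts by permutation matrices $e_c\mapsto e_{w(c)}$; $\ell(w)$ = number of inversions. For a transposition $s=(a\,b)$, $L_s\subset G$ is the copy of $\mathrm{SL}(2)$ acting on $\mathbb{C}e_a\oplus\mathbb{C}e_b$ and fixing the other $e_c$. An orthocell is $C=\langle s_1,\dots,s_d\rangle w\subset S_n$ with $s_1,\dots,s_d$ pairwise disjoint transpositions; $s_L=\prod_{k\in L}s_k$, $\bar L=\{1,\dots,d\}\setminus L$. $C$ is monogressive if $\ell(s_Lw)=\ell(w)+|L|$ for all $L\subset\{1,\dots,d\}$ (for $w$ then the unique minimal-length element of $C$, which we always use). $E(C)=\{g_1\cdots g_dwB: g_k\in L_{s_k}\}$, $E^{DJ}=\bigcup_{C\text{ monogressive}}E(C)$. $t_i=\mathrm{diag}(1,\dots,1,q,\dots,q)$ ($i$ ones), and $\sigma_i:E^{DJ}\to E^{DJ}$ is the automorphism equal on each $E(C)$ ($C$ monogressive, minimal element $w$) to $gB\mapsto wt_iw^{-1}gB$. $V^i=\Lambda^i\mathbb{C}^n$; $\mathrm{Pl}^i:G/B\to\mathbb{P}(V^i)$ sends a flag to $[f_1\wedge\dots\wedge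 f_i]$ for a basis of its $i$-dimensional member. $e_w^i=e_{w(1)}\wedge\dots\wedge e_{w(i)}$. A monogressive orthocell $C=\langle s_1,\dots,s_d\rangle w$ is $ij$-effective if for every $k$, $s_k$ preserves neither $\{w(1),\dots,w(i)\}$ nor $\{w(1),\dots,w(j)\}$; then $e_C^{ij}=\sum_{L\subset\{1,\dots,d\}}q^{|L|}e^i_{s_{\bar L}w}\otimes e^j_{s_Lw}$. $V^{ij}$ is the linear span of all $u\otimes v$ with $[u]=\mathrm{Pl}^i(p)$, $[v]=\mathrm{Pl}^j(\sigma_i(p))$, $p\in E^{DJ}$. *)

theory Defs
  imports Complex_Main "HOL-Library.Function_Algebras" "HOL-Combinatorics.Permutations"
    "HOL-Combinatorics.Transposition"
begin

text \<open>Indices of C^n are 1..n. Matrices are functions nat => nat => complex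
  (entry in row r, column c), only the block {1..n} x {1..n} being relevant.  A point gB of G/B is represented by a matrix g; its i-dimensional
  flag member is spanned by the first i columns of g.\<close>

definition mat_mult :: "nat \<Rightarrow> (nat \<Rightarrow> nat \<Rightarrow> complex) \<Rightarrow> (nat \<Rightarrow> nat \<Rightarrow> complex) \<Rightarrow> (nat \<Rightarrow> nat \<Rightarrow> complex)" where
  "mat_mult n A B = (\<lambda>r c. \<Sum>k\<in>{1..n}. A r k * B k c)"

definition mat_id :: "nat \<Rightarrow> nat \<Rightarrow> complex" where
  "mat_id = (\<lambda>r c. if r = c then 1 else 0)"

definition perm_mat :: "(nat \<Rightarrow> nat) \<Rightarrow> nat \<Rightarrow> nat \<Rightarrow> complex" where
  "perm_mat w = (\<lambda>r c. if r = w c then 1 else 0)"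

definition t_mat :: "complex \<Rightarrow> nat \<Rightarrow> nat \<Rightarrow> nat \<Rightarrow> complex" where
  "t_mat q i = (\<lambda>r c. if r = c then (if r \<le> i then 1 else q) else 0)"

text \<open>L_s for s = (a b): the copy of SL(2) acting on C e_a + C e_b, fixing the other e_c.\<close>
definition L_sub :: "nat \<Rightarrow> nat \<times> nat \<Rightarrow> (nat \<Rightarrow> nat \<Rightarrow> complex) set" where
  "L_sub n s = (case s of (a, b) \<Rightarrow>
     {g. (\<forall>r c. c \<notin> {a, b} \<longrightarrow> g r c = mat_id r c)
       \<and> (\<forall>r c. c \<in> {a, b} \<and> r \<notin> {a, b} \<longrightarrow> g r c = 0)
       \<and> g a a * g b b - g a b * g b a = 1})"

definition perm_length :: "nat \<Rightarrow> (nat \<Rightarrow> nat) \<Rightarrow> nat" where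
  "perm_length n w = card {(a, b). a \<in> {1..n} \<and> b \<in> {1..n} \<and> a < b \<and> w a > w b}"

text \<open>An orthocell is given by a list of transpositions (a_k, b_k) (meaning s_k = (a_k b_k))
  together with w.\<close>
definition is_orthocell :: "nat \<Rightarrow> (nat \<times> nat) list \<Rightarrow> (nat \<Rightarrow> nat) \<Rightarrow> bool" where
  "is_orthocell n ts w \<longleftrightarrow> w permutes {1..n}
     \<and> (\<forall>k < length ts. fst (ts ! k) \<in> {1..n} \<and> snd (ts ! k) \<in> {1..n} \<and> fst (ts ! k) \<noteq> snd (ts ! k))
     \<and> (\<forall>k < length ts. \<forall>l < length ts. k \<noteq> l \<longrightarrow>
          {fst (ts ! k), snd (ts ! k)} \<inter> {fst (ts ! l), snd (ts ! l)} = {})"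

text \<open>s_L = product of s_k, k in L (indices 0..d-1); pairwise disjoint, so order irrelevant.\<close>
definition s_prod :: "(nat \<times> nat) list \<Rightarrow> nat set \<Rightarrow> nat \<Rightarrow> nat" where
  "s_prod ts L = foldr (\<lambda>k f. transpose (fst (ts ! k)) (snd (ts ! k)) \<circ> f)
                     (sorted_list_of_set L) id"

definition monogressive :: "nat \<Rightarrow> (nat \<times> nat) list \<Rightarrow> (nat \<Rightarrow> nat) \<Rightarrow> bool" where
  "monogressive n ts w \<longleftrightarrow> is_orthocell n ts w
     \<and> (\<forall>L \<subseteq> {0..<length ts}. perm_length n (s_prod ts L \<circ> w) = perm_length n w + card L)"

text \<open>Representatives g_1 ... g_d w of the points of E(C).\<close>
definition E_reps :: "nat \<Rightarrow> (nat \<times> nat) list \<Rightarrow> (nat \<Rightarrow> nat) \<Rightarrow> (nat \<Rightarrow> nat \<Rightarrow> complex) set" where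
  "E_reps n ts w = {mat_mult n (foldr (mat_mult n) gs mat_id) (perm_mat w) | gs.
        length gs = length ts \<and> (\<forall>k < length ts. gs ! k \<in> L_sub n (ts ! k))}"

definition det_n :: "nat \<Rightarrow> (nat \<Rightarrow> nat \<Rightarrow> complex) \<Rightarrow> complex" where
  "det_n m M = (\<Sum>p | p permutes {1..m}. of_int (sign p) * (\<Prod>r\<in>{1..m}. M r (p r)))"

text \<open>Lambda^i C^n is identified with functions on i-subsets S of {1..n} (coordinates
  w.r.t. the basis e_S = e_(s_1) wedge ... wedge e_(s_i), s_1 < ... < s_i).
  wedge n i f is f 1 wedge ... wedge f i.\<close>
definition wedge :: "nat \<Rightarrow> nat \<Rightarrow> (nat \<Rightarrow> nat \<Rightarrow> complex) \<Rightarrow> nat set \<Rightarrow> complex" where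
  "wedge n i f S = (if S \<subseteq> {1..n} \<and> card S = i
      then det_n i (\<lambda>r m. f m (sorted_list_of_set S ! (r - 1))) else 0)"

definition std_basis :: "nat \<Rightarrow> nat \<Rightarrow> complex" where
  "std_basis a = (\<lambda>r. if r = a then 1 else 0)"

text \<open>Pl^i(gB), up to scalar: wedge of the first i columns of g.\<close>
definition pl_vec :: "nat \<Rightarrow> nat \<Rightarrow> (nat \<Rightarrow> nat \<Rightarrow> complex) \<Rightarrow> nat set \<Rightarrow> complex" where
  "pl_vec n i g = wedge n i (\<lambda>m r. g r m)"

definition e_w :: "nat \<Rightarrow> nat \<Rightarrow> (nat \<Rightarrow> nat) \<Rightarrow> nat set \<Rightarrow> complex" where
  "e_w n i w = wedge n i (\<lambda>m. std_basis (w m))"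

text \<open>V^i tensor V^j as functions on pairs of subsets.\<close>
definition tensor :: "(nat set \<Rightarrow> complex) \<Rightarrow> (nat set \<Rightarrow> complex) \<Rightarrow> nat set \<times> nat set \<Rightarrow> complex" where
  "tensor u v = (\<lambda>(S, T). u S * v T)"

definition cspan :: "(nat set \<times> nat set \<Rightarrow> complex) set \<Rightarrow> (nat set \<times> nat set \<Rightarrow> complex) set" where
  "cspan = module.span (\<lambda>c f. (\<lambda>x. c * f x))"

text \<open>V^ij: span of u tensor v with [u] = Pl^i(p), [v] = Pl^j(sigma_i p), p in E^DJ; on E(C)
  (C monogressive with minimal element w), sigma_i(gB) = w t_i w^-1 g B.\<close>
definition V_ij :: "nat \<Rightarrow> complex \<Rightarrow> nat \<Rightarrow> nat \<Rightarrow> (nat set \<times> nat set \<Rightarrow> complex) set" where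
  "V_ij n q i j = cspan {tensor u v | u v. \<exists>ts w g a b.
      monogressive n ts w \<and> g \<in> E_reps n ts w \<and> a \<noteq> 0 \<and> b \<noteq> 0
      \<and> u = (\<lambda>S. a * pl_vec n i g S)
      \<and> v = (\<lambda>T. b * pl_vec n j
              (mat_mult n (mat_mult n (mat_mult n (perm_mat w) (t_mat q i)) (perm_mat (inv_into {1..n} w))) g) T)}"

definition ij_effective :: "nat \<Rightarrow> nat \<Rightarrow> nat \<Rightarrow> (nat \<times> nat) list \<Rightarrow> (nat \<Rightarrow> nat) \<Rightarrow> bool" where
  "ij_effective n i j ts w \<longleftrightarrow> monogressive n ts w \<and>
     (\<forall>k < length ts. \<forall>m \<in> {i, j}.
        transpose (fst (ts ! k)) (snd (ts ! k)) ` (w ` {1..m}) \<noteq> w ` {1..m})"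

definition e_C :: "nat \<Rightarrow> complex \<Rightarrow> nat \<Rightarrow> nat \<Rightarrow> (nat \<times> nat) list \<Rightarrow> (nat \<Rightarrow> nat)
     \<Rightarrow> nat set \<times> nat set \<Rightarrow> complex" where
  "e_C n q i j ts w = (\<Sum>L\<in>Pow {0..<length ts}.
      (\<lambda>x. q ^ card L * tensor (e_w n i (s_prod ts ({0..<length ts} - L) \<circ> w))
                              (e_w n j (s_prod ts L \<circ> w)) x))"

end

(*
  Write a point of E(C) as g_1 ... g_d w with g_k in L_{s_k}.  Since the blocks {a_k, b_k} are
  pairwise disjoint, the Pluecker coordinates of this point and of its image under sigma_i depend
  multilinearly on the columns of the g_k, so the g_k can be multiplied in one at a time.  The
  intermediate stages are the cell tensors, in which the blocks of a set K still carry their factor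
  g_k while the blocks of a set E are already expanded as in e_C.  Multiplying in g_k gives a
  combination of cell tensors at w and at s_k w (using det g_k = 1 when s_k preserves w{1..i} or
  w{1..j}); if s_k preserves neither, a further term appears in which k has moved into E.  By
  induction on K every generator of V^ij is a combination of vectors e_C of effective subcells.
  Conversely, taking for g_k the transvections with parameters 1 and -1 and subtracting isolates
  that further term, so by induction on E every e_C of an effective cell lies in V^ij.
*)

theory Submission
  imports Defs
begin

section \<open>Determinants and wedge products\<close>

lemma det_n_cong:
  assumes "\<And>r c. r \<in> {1..t} \<Longrightarrow> c \<in> {1..t} \<Longrightarrow> M r c = M' r c"
  shows "det_n t M = det_n t M'"
  unfolding det_n_def
proof (intro sum.cong refl arg_cong2[where f = "(*)"] prod.cong)
  fix p r assume "p \<in> {p. p permutes {1..t}}" "r \<in> {1..t}"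
  then show "M r (p r) = M' r (p r)"
    using assms permutes_in_image by fastforce
qed

lemma det_n_swap_cols:
  assumes "c \<in> {1..t}" "c' \<in> {1..t}" "c \<noteq> c'"
  shows "det_n t (\<lambda>r m. M r (transpose c c' m)) = - det_n t M"
proof -
  let ?\<tau> = "transpose c c'"
  have \<tau>: "?\<tau> permutes {1..t}"
    using assms by (simp add: permutes_swap_id)
  have sign: "sign (?\<tau> \<circ> p) = - sign p" if "p permutes {1..t}" for p
  proof -
    have "permutation p" "permutation ?\<tau>"
      using that \<tau> permutation_permutes by blast+
    then show ?thesis
      using assms(3) by (simp add: sign_compose sign_swap_id)
  qed
  have "det_n t (\<lambda>r m. M r (?\<tau> m))
      = (\<Sum>p | p permutes {1..t}. - (of_int (sign p) * (\<Prod>r\<in>{1..t}. M r (p r))))"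
    unfolding det_n_def
  proof (rule sum.reindex_bij_witness[where i = "\<lambda>p. ?\<tau> \<circ> p" and j = "\<lambda>p. ?\<tau> \<circ> p"])
    fix p assume "p \<in> {p. p permutes {1..t}}"
    then show "- (of_int (sign (?\<tau> \<circ> p)) * (\<Prod>r\<in>{1..t}. M r ((?\<tau> \<circ> p) r)))
             = of_int (sign p) * (\<Prod>r\<in>{1..t}. M r (?\<tau> (p r)))"
      using sign by simp
  qed (use \<tau> in \<open>auto intro: permutes_compose simp: fun_eq_iff\<close>)
  then show ?thesis
    unfolding det_n_def by (simp add: sum_negf)
qed

lemma det_n_eq_0_if_cols_eq:
  assumes "c \<in> {1..t}" "c' \<in> {1..t}" "c \<noteq> c'" "\<And>r. M r c = M r c'"
  shows "det_n t M = 0"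
proof -
  have "(\<lambda>r m. M r (transpose c c' m)) = M"
    using assms(4) by (auto simp: fun_eq_iff transpose_def)
  then show ?thesis
    using det_n_swap_cols[OF assms(1-3), of M] by simp
qed

lemma det_n_linear_col:
  assumes c: "c \<in> {1..t}" and M: "\<And>r. M r c = \<alpha> * A r + \<beta> * B r"
  shows "det_n t M = \<alpha> * det_n t (\<lambda>r m. if m = c then A r else M r m)
                   + \<beta> * det_n t (\<lambda>r m. if m = c then B r else M r m)"
proof -
  let ?MA = "\<lambda>r m. if m = c then A r else M r m"
  let ?MB = "\<lambda>r m. if m = c then B r else M r m"
  have expand: "(\<Prod>r\<in>{1..t}. M r (p r))
      = \<alpha> * (\<Prod>r\<in>{1..t}. ?MA r (p r)) + \<beta> * (\<Prod>r\<in>{1..t}. ?MB r (p r))"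
    if p: "p permutes {1..t}" for p
  proof -
    obtain r0 where r0: "r0 \<in> {1..t}" "p r0 = c"
      using c permutes_image[OF p] by (metis imageE)
    have "p r \<noteq> c" if "r \<noteq> r0" for r
      using permutes_inj[OF p] r0 that by (metis injD)
    then have rest: "(\<Prod>r\<in>{1..t}-{r0}. ?MA r (p r)) = (\<Prod>r\<in>{1..t}-{r0}. M r (p r))"
      "(\<Prod>r\<in>{1..t}-{r0}. ?MB r (p r)) = (\<Prod>r\<in>{1..t}-{r0}. M r (p r))"
      by (auto intro!: prod.cong)
    have split: "(\<Prod>r\<in>{1..t}. F r) = F r0 * (\<Prod>r\<in>{1..t}-{r0}. F r)" for F :: "nat \<Rightarrow> complex"
      using r0(1) by (simp add: prod.remove)
    show ?thesis
      by (subst (1 2 3) split) (use r0 M rest in \<open>simp add: algebra_simps\<close>)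
  qed
  have "det_n t M = (\<Sum>p | p permutes {1..t}.
      \<alpha> * (of_int (sign p) * (\<Prod>r\<in>{1..t}. ?MA r (p r)))
      + \<beta> * (of_int (sign p) * (\<Prod>r\<in>{1..t}. ?MB r (p r))))"
    unfolding det_n_def by (intro sum.cong refl) (use expand in \<open>simp add: algebra_simps\<close>)
  then show ?thesis
    unfolding det_n_def by (simp add: sum.distrib sum_distrib_left)
qed

lemma det_n_scale_cols:
  "det_n t (\<lambda>r m. \<gamma> m * M r m) = (\<Prod>m\<in>{1..t}. \<gamma> m) * det_n t M"
proof -
  have "(\<Prod>r\<in>{1..t}. \<gamma> (p r) * M r (p r)) = (\<Prod>m\<in>{1..t}. \<gamma> m) * (\<Prod>r\<in>{1..t}. M r (p r))"
    if "p permutes {1..t}" for p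
    using prod.permute[OF that, of \<gamma>] by (simp add: prod.distrib o_def)
  then show ?thesis
    unfolding det_n_def sum_distrib_left by (intro sum.cong) (simp_all add: algebra_simps)
qed

lemma wedge_cong:
  assumes "\<And>m r. m \<in> {1..t} \<Longrightarrow> r \<in> {1..n} \<Longrightarrow> f m r = f' m r"
  shows "wedge n t f S = wedge n t f' S"
proof (cases "S \<subseteq> {1..n} \<and> card S = t")
  case True
  have "sorted_list_of_set S ! (r - 1) \<in> {1..n}" if "r \<in> {1..t}" for r
  proof -
    have "finite S"
      using True finite_subset by blast
    then have "sorted_list_of_set S ! (r - 1) \<in> set (sorted_list_of_set S)"
      using True that by (intro nth_mem) auto
    then show ?thesis
      using True \<open>finite S\<close> by auto
  qed
  then show ?thesis
    unfolding wedge_def using True assms by (auto intro!: det_n_cong)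
next
  case False
  show ?thesis
    unfolding wedge_def if_not_P[OF False] by (rule refl)
qed

lemma wedge_swap:
  assumes "m \<in> {1..t}" "m' \<in> {1..t}" "m \<noteq> m'"
  shows "wedge n t (f \<circ> transpose m m') S = - wedge n t f S"
  unfolding wedge_def
  using det_n_swap_cols[OF assms, of "\<lambda>r c. f c (sorted_list_of_set S ! (r - 1))"] by simp

lemma wedge_eq_0_if_eq:
  assumes "m \<in> {1..t}" "m' \<in> {1..t}" "m \<noteq> m'" "f m = f m'"
  shows "wedge n t f S = 0"
  unfolding wedge_def using det_n_eq_0_if_cols_eq[OF assms(1-3)] assms(4) by simp

lemma wedge_linear:
  assumes "m \<in> {1..t}" "f m = (\<lambda>r. \<alpha> * A r + \<beta> * B r)"
  shows "wedge n t f S = \<alpha> * wedge n t (f(m := A)) S + \<beta> * wedge n t (f(m := B)) S"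
proof -
  let ?s = "\<lambda>r. sorted_list_of_set S ! (r - 1)"
  have "(\<lambda>r c. if c = m then X (?s r) else f c (?s r)) = (\<lambda>r c. (f(m := X)) c (?s r))" for X
    by (auto simp: fun_eq_iff)
  then show ?thesis
    unfolding wedge_def
    using det_n_linear_col[OF assms(1), of "\<lambda>r c. f c (?s r)" \<alpha> "\<lambda>r. A (?s r)" \<beta> "\<lambda>r. B (?s r)"] assms(2)
    by simp
qed

lemma wedge_scale:
  "wedge n t (\<lambda>m r. \<gamma> m * f m r) S = (\<Prod>m\<in>{1..t}. \<gamma> m) * wedge n t f S"
  unfolding wedge_def using det_n_scale_cols[of t \<gamma>] by simp

lemma wedge_unimodular_cols:
  assumes m: "m \<in> {1..t}" "m' \<in> {1..t}" "m \<noteq> m'"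
    and cols: "f m = (\<lambda>r. \<alpha> * A r + \<gamma> * B r)" "f m' = (\<lambda>r. \<delta> * B r + \<beta> * A r)"
    and det: "\<alpha> * \<delta> - \<beta> * \<gamma> = 1"
  shows "wedge n t f S = wedge n t (f(m := A, m' := B)) S"
proof -
  define F where "F = f(m := A, m' := B)"
  define F' where "F' = f(m := B, m' := A)"
  have "wedge n t f S = \<alpha> * wedge n t (f(m := A)) S + \<gamma> * wedge n t (f(m := B)) S"
    by (rule wedge_linear[where f = f and A = A and B = B, OF m(1) cols(1)])
  also have "wedge n t (f(m := A)) S = \<delta> * wedge n t F S + \<beta> * wedge n t (f(m := A, m' := A)) S"
    unfolding F_def by (rule wedge_linear[OF m(2)]) (use cols(2) m(3) in simp)
  also have "wedge n t (f(m := B)) S = \<delta> * wedge n t (f(m := B, m' := B)) S + \<beta> * wedge n t F' S"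
    unfolding F'_def by (rule wedge_linear[OF m(2)]) (use cols(2) m(3) in simp)
  also have "wedge n t (f(m := A, m' := A)) S = 0"
    by (rule wedge_eq_0_if_eq[OF m]) (use m(3) in simp)
  also have "wedge n t (f(m := B, m' := B)) S = 0"
    by (rule wedge_eq_0_if_eq[OF m]) (use m(3) in simp)
  also have "wedge n t F' S = - wedge n t F S"
  proof -
    have "F' = F \<circ> transpose m m'"
      unfolding F_def F'_def using m(3) by (auto simp: fun_eq_iff transpose_def)
    then show ?thesis
      using wedge_swap[OF m, where f = F and n = n and S = S] by simp
  qed
  finally have "wedge n t f S = (\<alpha> * \<delta> - \<beta> * \<gamma>) * wedge n t F S"
    by (simp add: algebra_simps)
  with det show ?thesis
    unfolding F_def by simp
qed

interpretation cfun: module "\<lambda>c (f :: 'a \<Rightarrow> complex) x. c * f x"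
  by unfold_locales (auto simp: fun_eq_iff algebra_simps)

lemma cspan_eq: "cspan = cfun.span"
  unfolding cspan_def ..

lemma cspan_base: "f \<in> A \<Longrightarrow> f \<in> cspan A"
  unfolding cspan_eq by (rule cfun.span_base)

lemma cspan_scale: "f \<in> cspan A \<Longrightarrow> (\<lambda>z. c * f z) \<in> cspan A"
  unfolding cspan_eq by (rule cfun.span_scale)

lemma cspan_lin_comb2:
  assumes "f \<in> cspan A" "g \<in> cspan A"
  shows "(\<lambda>z. c * f z + c' * g z) \<in> cspan A"
  using cfun.span_add[OF cfun.span_scale cfun.span_scale, OF assms[unfolded cspan_eq]]
  unfolding cspan_eq by (simp add: plus_fun_def)

lemma cspan_lin_comb3:
  assumes "f \<in> cspan A" "g \<in> cspan A" "h \<in> cspan A"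
  shows "(\<lambda>z. c * f z + c' * g z + c'' * h z) \<in> cspan A"
  using cspan_lin_comb2[OF cspan_lin_comb2[OF assms(1,2), of c c'] assms(3), of 1 c''] by simp

lemma sum_fun_apply: "(\<Sum>a\<in>A. f a) x = (\<Sum>a\<in>A. f a x)"
  by (induction A rule: infinite_finite_induct) simp_all

lemma sum_Pow_insert:
  assumes "finite E" "k \<notin> E"
  shows "(\<Sum>L\<in>Pow (insert k E). f L) = (\<Sum>L\<in>Pow E. f L) + (\<Sum>L\<in>Pow E. f (insert k L))"
proof -
  have "inj_on (insert k) (Pow E)"
  proof (rule inj_onI)
    fix x y assume "x \<in> Pow E" "y \<in> Pow E" "insert k x = insert k y"
    moreover from this have "k \<notin> x" "k \<notin> y"
      using assms(2) by auto
    ultimately show "x = y"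
      by (metis Diff_insert_absorb)
  qed
  moreover have "Pow E \<inter> insert k ` Pow E = {}"
    using assms(2) by auto
  ultimately show ?thesis
    unfolding Pow_insert using assms(1) by (simp add: sum.union_disjoint sum.reindex)
qed

lemma transpose_image_neq_iff:
  assumes "a \<noteq> b"
  shows "transpose a b ` A \<noteq> A \<longleftrightarrow> (a \<in> A \<longleftrightarrow> b \<notin> A)"
proof
  assume sep: "a \<in> A \<longleftrightarrow> b \<notin> A"
  show "transpose a b ` A \<noteq> A"
  proof
    assume "transpose a b ` A = A"
    then have "a \<in> A \<longleftrightarrow> b \<in> A"
      using in_transpose_image_iff[of a a b A] by simp
    with sep show False by blast
  qed
next
  assume "transpose a b ` A \<noteq> A"
  then show "a \<in> A \<longleftrightarrow> b \<notin> A"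
    using transpose_image_eq[of a A b] by blast
qed

definition disjoint_transpositions :: "nat \<Rightarrow> (nat \<times> nat) list \<Rightarrow> bool" where
  "disjoint_transpositions n ts \<longleftrightarrow>
     (\<forall>k < length ts. fst (ts ! k) \<in> {1..n} \<and> snd (ts ! k) \<in> {1..n} \<and> fst (ts ! k) \<noteq> snd (ts ! k))
     \<and> (\<forall>k < length ts. \<forall>l < length ts. k \<noteq> l \<longrightarrow>
          {fst (ts ! k), snd (ts ! k)} \<inter> {fst (ts ! l), snd (ts ! l)} = {})"

lemma is_orthocell_iff: "is_orthocell n ts w \<longleftrightarrow> w permutes {1..n} \<and> disjoint_transpositions n ts"
  unfolding is_orthocell_def disjoint_transpositions_def by blast

lemma monogressiveD:
  assumes "monogressive n ts w"
  shows "w permutes {1..n}" "disjoint_transpositions n ts"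
    "\<And>L. L \<subseteq> {0..<length ts} \<Longrightarrow> perm_length n (s_prod ts L \<circ> w) = perm_length n w + card L"
  using assms unfolding monogressive_def is_orthocell_iff by auto

definition a_of :: "(nat \<times> nat) list \<Rightarrow> nat \<Rightarrow> nat" where
  "a_of ts k = fst (ts ! k)"

definition b_of :: "(nat \<times> nat) list \<Rightarrow> nat \<Rightarrow> nat" where
  "b_of ts k = snd (ts ! k)"

definition s_of :: "(nat \<times> nat) list \<Rightarrow> nat \<Rightarrow> nat \<Rightarrow> nat" where
  "s_of ts k = transpose (a_of ts k) (b_of ts k)"

lemma s_of_a [simp]: "s_of ts k (a_of ts k) = b_of ts k"
  and s_of_b [simp]: "s_of ts k (b_of ts k) = a_of ts k"
  and s_of_s_of [simp]: "s_of ts k (s_of ts k x) = x"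
  unfolding s_of_def by simp_all

lemma s_of_other: "x \<noteq> a_of ts k \<Longrightarrow> x \<noteq> b_of ts k \<Longrightarrow> s_of ts k x = x"
  unfolding s_of_def by simp

lemma s_of_comp_image_iff: "x \<in> (s_of ts k \<circ> v) ` A \<longleftrightarrow> s_of ts k x \<in> v ` A"
  unfolding s_of_def image_comp[symmetric] by (rule in_transpose_image_iff)

lemma s_prod_empty [simp]: "s_prod ts {} = id"
  unfolding s_prod_def by simp

text \<open>The product of the g_k over k \<in> K, described column by column: since the blocks
  {a_k, b_k} are disjoint, column c is that of the g_k whose block contains c, or e_c.\<close>
definition block_prod :: "(nat \<times> nat) list \<Rightarrow> (nat \<Rightarrow> nat \<Rightarrow> complex) list \<Rightarrow> nat set
    \<Rightarrow> nat \<Rightarrow> nat \<Rightarrow> complex" where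
  "block_prod ts gs K r c = (if \<exists>k\<in>K. c = a_of ts k \<or> c = b_of ts k
      then (gs ! (SOME k. k \<in> K \<and> (c = a_of ts k \<or> c = b_of ts k))) r c else mat_id r c)"

definition block_factors :: "nat \<Rightarrow> (nat \<times> nat) list \<Rightarrow> (nat \<Rightarrow> nat \<Rightarrow> complex) list \<Rightarrow> bool" where
  "block_factors n ts gs \<longleftrightarrow> length gs = length ts \<and> (\<forall>k < length ts. gs ! k \<in> L_sub n (ts ! k))"

lemma L_sub_col_out: "g \<in> L_sub n (a, b) \<Longrightarrow> c \<noteq> a \<Longrightarrow> c \<noteq> b \<Longrightarrow> g r c = mat_id r c"
  and L_sub_col_in: "g \<in> L_sub n (a, b) \<Longrightarrow> c = a \<or> c = b \<Longrightarrow> r \<noteq> a \<Longrightarrow> r \<noteq> b \<Longrightarrow> g r c = 0"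
  and L_sub_det: "g \<in> L_sub n (a, b) \<Longrightarrow> g a a * g b b - g a b * g b a = 1"
  unfolding L_sub_def by auto

locale transposition_blocks =
  fixes n :: nat and ts :: "(nat \<times> nat) list"
  assumes disjoint: "disjoint_transpositions n ts"
begin

abbreviation "d \<equiv> length ts"

lemma transposition_in:
  "k < d \<Longrightarrow> a_of ts k \<in> {1..n} \<and> b_of ts k \<in> {1..n} \<and> a_of ts k \<noteq> b_of ts k"
  using disjoint unfolding disjoint_transpositions_def a_of_def b_of_def by blast

lemma transpositions_disjoint: "k < d \<Longrightarrow> l < d \<Longrightarrow> k \<noteq> l \<Longrightarrow>
   a_of ts k \<noteq> a_of ts l \<and> a_of ts k \<noteq> b_of ts l \<and> b_of ts k \<noteq> a_of ts l \<and> b_of ts k \<noteq> b_of ts l"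
  using disjoint unfolding disjoint_transpositions_def a_of_def b_of_def by blast

lemma not_in_other_blocks:
  "k < d \<Longrightarrow> K \<subseteq> {0..<d} \<Longrightarrow> k \<notin> K \<Longrightarrow> x = a_of ts k \<or> x = b_of ts k
    \<Longrightarrow> \<forall>l\<in>K. x \<noteq> a_of ts l \<and> x \<noteq> b_of ts l"
  using transpositions_disjoint by fastforce

lemma s_of_permutes: "k < d \<Longrightarrow> s_of ts k permutes {1..n}"
  unfolding s_of_def using transposition_in by (simp add: permutes_swap_id)

lemma s_of_commute: "k < d \<Longrightarrow> l < d \<Longrightarrow> s_of ts k \<circ> s_of ts l = s_of ts l \<circ> s_of ts k"
  using transpositions_disjoint[of k l]
  by (cases "k = l") (auto simp: s_of_def fun_eq_iff transpose_def)

lemma s_prod_insert: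
  assumes "L \<subseteq> {0..<d}" "k < d" "k \<notin> L"
  shows "s_prod ts (insert k L) = s_of ts k \<circ> s_prod ts L"
proof -
  have fin: "finite L"
    using assms(1) finite_subset by blast
  have "foldr (\<lambda>k f. s_of ts k \<circ> f) (insort k xs) id = s_of ts k \<circ> foldr (\<lambda>k f. s_of ts k \<circ> f) xs id"
    if "set xs \<subseteq> L" for xs
    using that
  proof (induction xs)
    case (Cons x xs)
    then have "s_of ts x \<circ> s_of ts k = s_of ts k \<circ> s_of ts x"
      using assms s_of_commute by auto
    with Cons show ?case
      by (auto simp: fun_eq_iff o_def)
  qed simp
  then show ?thesis
    unfolding s_prod_def s_of_def[symmetric] a_of_def[symmetric] b_of_def[symmetric]
      sorted_list_of_set_insert[OF fin assms(3)]
    using fin by simp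
qed

lemma s_prod_permutes: "L \<subseteq> {0..<d} \<Longrightarrow> s_prod ts L permutes {1..n}"
proof (induction L rule: infinite_finite_induct)
  case (insert k L)
  then have "s_prod ts (insert k L) = s_of ts k \<circ> s_prod ts L"
    by (intro s_prod_insert) auto
  then show ?case
    unfolding \<open>s_prod ts (insert k L) = s_of ts k \<circ> s_prod ts L\<close>
    using insert by (intro permutes_compose s_of_permutes) auto
qed (auto intro: permutes_id dest: finite_subset)

lemma s_prod_union:
  "L \<subseteq> {0..<d} \<Longrightarrow> M \<subseteq> {0..<d} \<Longrightarrow> L \<inter> M = {} \<Longrightarrow> s_prod ts (L \<union> M) = s_prod ts L \<circ> s_prod ts M"
proof (induction L rule: infinite_finite_induct)
  case (insert k L)
  then have "s_prod ts (insert k L \<union> M) = s_of ts k \<circ> s_prod ts (L \<union> M)"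
    using s_prod_insert[of "L \<union> M" k] by simp
  with insert show ?case
    using s_prod_insert[of L k] by (simp add: o_assoc)
qed (auto dest: finite_subset)

lemma s_prod_singleton: "k < d \<Longrightarrow> s_prod ts {k} = s_of ts k"
  using s_prod_insert[of "{}" k] by simp

lemma s_prod_s_of_commute:
  assumes "A \<subseteq> {0..<d}" "k < d" "k \<notin> A"
  shows "s_prod ts A \<circ> s_of ts k = s_of ts k \<circ> s_prod ts A"
proof -
  have "s_prod ts (A \<union> {k}) = s_prod ts A \<circ> s_prod ts {k}"
    and "s_prod ts ({k} \<union> A) = s_prod ts {k} \<circ> s_prod ts A"
    by (rule s_prod_union; use assms in auto)+
  then show ?thesis
    using s_prod_singleton[OF assms(2)] by (metis Un_commute)
qed

lemma s_prod_image_iff: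
  "L \<subseteq> {0..<d} \<Longrightarrow> \<forall>l\<in>L. x \<noteq> a_of ts l \<and> x \<noteq> b_of ts l \<Longrightarrow> x \<in> s_prod ts L ` B \<longleftrightarrow> x \<in> B"
proof (induction L rule: infinite_finite_induct)
  case (insert k L)
  then have "x \<in> s_prod ts (insert k L) ` B \<longleftrightarrow> s_of ts k x \<in> s_prod ts L ` B"
    using s_prod_insert[of L k] s_of_comp_image_iff[of x ts k "s_prod ts L" B]
    by (simp add: image_comp)
  with insert show ?case
    by (simp add: s_of_other)
qed (auto dest: finite_subset)

lemma s_prod_comp_image_iff:
  assumes "A \<subseteq> {0..<d}" "k < d" "k \<notin> A" "x = a_of ts k \<or> x = b_of ts k"
  shows "x \<in> (s_prod ts A \<circ> w) ` B \<longleftrightarrow> x \<in> w ` B"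
  unfolding image_comp[symmetric]
  using s_prod_image_iff[OF assms(1) not_in_other_blocks[OF assms(2,1,3,4)]] by blast

lemma block_prod_col_in:
  assumes "K \<subseteq> {0..<d}" "k \<in> K" "c = a_of ts k \<or> c = b_of ts k"
  shows "block_prod ts gs K r c = (gs ! k) r c"
proof -
  have "(SOME l. l \<in> K \<and> (c = a_of ts l \<or> c = b_of ts l)) = k"
  proof (rule some_equality)
    fix l assume l: "l \<in> K \<and> (c = a_of ts l \<or> c = b_of ts l)"
    then have "k < d" "l < d"
      using assms by auto
    with l show "l = k"
      using assms(3) transpositions_disjoint[of k l] by auto
  qed (use assms in blast)
  then show ?thesis
    unfolding block_prod_def using assms by auto
qed

lemma block_prod_col_out:
  "\<forall>k\<in>K. c \<noteq> a_of ts k \<and> c \<noteq> b_of ts k \<Longrightarrow> block_prod ts gs K r c = mat_id r c"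
  unfolding block_prod_def by simp

lemma block_prod_insert_other:
  assumes "c \<noteq> a_of ts k" "c \<noteq> b_of ts k"
  shows "block_prod ts gs (insert k K) r c = block_prod ts gs K r c"
proof -
  have "(\<lambda>l. l \<in> insert k K \<and> (c = a_of ts l \<or> c = b_of ts l))
      = (\<lambda>l. l \<in> K \<and> (c = a_of ts l \<or> c = b_of ts l))"
    and "(\<exists>l\<in>insert k K. c = a_of ts l \<or> c = b_of ts l) = (\<exists>l\<in>K. c = a_of ts l \<or> c = b_of ts l)"
    using assms by auto
  then show ?thesis
    unfolding block_prod_def by simp
qed

lemma block_factorsD: "block_factors n ts gs \<Longrightarrow> k < d \<Longrightarrow> gs ! k \<in> L_sub n (a_of ts k, b_of ts k)"
  unfolding block_factors_def a_of_def b_of_def by simp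


lemma block_prod_row_out:
  assumes gs: "block_factors n ts gs" and K: "K \<subseteq> {0..<d}"
    and x: "\<forall>l\<in>K. x \<noteq> a_of ts l \<and> x \<noteq> b_of ts l" and "c \<noteq> x"
  shows "block_prod ts gs K x c = 0"
proof (cases "\<exists>l\<in>K. c = a_of ts l \<or> c = b_of ts l")
  case True
  then obtain l where l: "l \<in> K" "c = a_of ts l \<or> c = b_of ts l"
    by blast
  then have "block_prod ts gs K x c = (gs ! l) x c"
    using block_prod_col_in[OF K] by blast
  also have "\<dots> = 0"
    using L_sub_col_in[OF block_factorsD[OF gs, of l]] l K x by auto
  finally show ?thesis .
next
  case False
  then show ?thesis
    using block_prod_col_out[of K c] \<open>c \<noteq> x\<close> by (auto simp: mat_id_def)
qed
end

section \<open>Pluecker coordinates of partial products\<close>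

text \<open>Pl^t of diag(\<delta>) (\<Prod>k\<in>K. g_k) w.\<close>
definition pl_block :: "nat \<Rightarrow> nat \<Rightarrow> (nat \<Rightarrow> complex) \<Rightarrow> (nat \<times> nat) list
    \<Rightarrow> (nat \<Rightarrow> nat \<Rightarrow> complex) list \<Rightarrow> nat set \<Rightarrow> (nat \<Rightarrow> nat) \<Rightarrow> nat set \<Rightarrow> complex" where
  "pl_block n t \<delta> ts gs K w = wedge n t (\<lambda>m r. \<delta> r * block_prod ts gs K r (w m))"

context transposition_blocks
begin

lemma block_prod_insert_col:
  assumes gs: "block_factors n ts gs" and K: "K \<subseteq> {0..<d}" "k < d" "k \<notin> K"
    and c: "c = a_of ts k \<or> c = b_of ts k"
  shows "(\<lambda>r. \<delta> r * block_prod ts gs (insert k K) r c)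
      = (\<lambda>r. (gs ! k) c c * (\<delta> r * block_prod ts gs K r c)
           + (gs ! k) (s_of ts k c) c * (\<delta> r * block_prod ts gs K r (s_of ts k c)))"
proof
  fix r
  have "s_of ts k c = a_of ts k \<or> s_of ts k c = b_of ts k" "s_of ts k c \<noteq> c"
    using c transposition_in[OF K(2)] by auto
  moreover have "block_prod ts gs K r x = mat_id r x" if "x = a_of ts k \<or> x = b_of ts k" for x
    using block_prod_col_out not_in_other_blocks[OF K(2,1,3) that] by blast
  moreover have "r \<noteq> c \<Longrightarrow> r \<noteq> s_of ts k c \<Longrightarrow> (gs ! k) r c = 0"
    using L_sub_col_in[OF block_factorsD[OF gs K(2)], of c r] c by auto
  moreover have "block_prod ts gs (insert k K) r c = (gs ! k) r c"
    using K c by (intro block_prod_col_in) auto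
  ultimately show "\<delta> r * block_prod ts gs (insert k K) r c
      = (gs ! k) c c * (\<delta> r * block_prod ts gs K r c)
        + (gs ! k) (s_of ts k c) c * (\<delta> r * block_prod ts gs K r (s_of ts k c))"
    using c by (cases "r = c"; cases "r = s_of ts k c") (auto simp: mat_id_def)
qed

lemma pl_block_insert_outside:
  assumes "a_of ts k \<notin> v ` {1..t}" "b_of ts k \<notin> v ` {1..t}"
  shows "pl_block n t \<delta> ts gs (insert k K) v S = pl_block n t \<delta> ts gs K v S"
    and "pl_block n t \<delta> ts gs K (s_of ts k \<circ> v) S = pl_block n t \<delta> ts gs K v S"
proof -
  have "v m \<noteq> a_of ts k" "v m \<noteq> b_of ts k" if "m \<in> {1..t}" for m
    using assms that by (metis image_eqI)+
  then show "pl_block n t \<delta> ts gs (insert k K) v S = pl_block n t \<delta> ts gs K v S"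
    and "pl_block n t \<delta> ts gs K (s_of ts k \<circ> v) S = pl_block n t \<delta> ts gs K v S"
    unfolding pl_block_def by (auto intro!: wedge_cong simp: block_prod_insert_other s_of_other)
qed

lemma pl_block_insert_split:
  assumes gs: "block_factors n ts gs" and K: "K \<subseteq> {0..<d}" "k < d" "k \<notin> K" and v: "inj v"
    and x: "x = a_of ts k \<or> x = b_of ts k" "x \<in> v ` {1..t}" "s_of ts k x \<notin> v ` {1..t}"
  shows "pl_block n t \<delta> ts gs (insert k K) v S = (gs ! k) x x * pl_block n t \<delta> ts gs K v S
          + (gs ! k) (s_of ts k x) x * pl_block n t \<delta> ts gs K (s_of ts k \<circ> v) S"
proof -
  obtain m0 where m0: "m0 \<in> {1..t}" "v m0 = x"
    using x(2) by auto
  have other: "v m \<noteq> a_of ts k \<and> v m \<noteq> b_of ts k" if "m \<in> {1..t}" "m \<noteq> m0" for m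
  proof -
    have "v m \<noteq> x" "v m \<noteq> s_of ts k x"
      using injD[OF v] m0 x(3) that by (metis image_eqI)+
    then show ?thesis
      using x(1) by auto
  qed
  let ?f = "\<lambda>m r. \<delta> r * block_prod ts gs (insert k K) r (v m)"
  let ?A = "\<lambda>r. \<delta> r * block_prod ts gs K r x"
  let ?B = "\<lambda>r. \<delta> r * block_prod ts gs K r (s_of ts k x)"
  have "pl_block n t \<delta> ts gs (insert k K) v S
      = (gs ! k) x x * wedge n t (?f(m0 := ?A)) S + (gs ! k) (s_of ts k x) x * wedge n t (?f(m0 := ?B)) S"
    unfolding pl_block_def
    by (rule wedge_linear[OF m0(1)]) (use block_prod_insert_col[OF gs K x(1)] m0(2) in simp)
  moreover have "wedge n t (?f(m0 := ?A)) S = pl_block n t \<delta> ts gs K v S"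
    and "wedge n t (?f(m0 := ?B)) S = pl_block n t \<delta> ts gs K (s_of ts k \<circ> v) S"
    unfolding pl_block_def using m0 other
    by (auto intro!: wedge_cong simp: block_prod_insert_other s_of_other)
  ultimately show ?thesis
    by simp
qed

lemma pl_block_insert_inside:
  assumes gs: "block_factors n ts gs" and K: "K \<subseteq> {0..<d}" "k < d" "k \<notin> K" and v: "inj v"
    and ab: "a_of ts k \<in> v ` {1..t}" "b_of ts k \<in> v ` {1..t}"
  shows "pl_block n t \<delta> ts gs (insert k K) v S = pl_block n t \<delta> ts gs K v S"
    and "pl_block n t \<delta> ts gs K (s_of ts k \<circ> v) S = - pl_block n t \<delta> ts gs K v S"
proof -
  let ?a = "a_of ts k" and ?b = "b_of ts k" and ?g = "gs ! k"
  obtain m0 m1 where m0: "m0 \<in> {1..t}" "v m0 = ?a" and m1: "m1 \<in> {1..t}" "v m1 = ?b"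
    using ab by auto
  have m01: "m0 \<noteq> m1"
    using m0 m1 transposition_in[OF K(2)] by auto
  have other: "v m \<noteq> ?a \<and> v m \<noteq> ?b" if "m \<noteq> m0" "m \<noteq> m1" for m
    using injD[OF v] m0 m1 that by metis
  define f where "f = (\<lambda>m r. \<delta> r * block_prod ts gs (insert k K) r (v m))"
  define A where "A = (\<lambda>r. \<delta> r * block_prod ts gs K r ?a)"
  define B where "B = (\<lambda>r. \<delta> r * block_prod ts gs K r ?b)"
  have F: "wedge n t (f(m0 := A, m1 := B)) S = pl_block n t \<delta> ts gs K v S"
    unfolding pl_block_def f_def A_def B_def using m0 m1 other
    by (auto intro!: wedge_cong simp: block_prod_insert_other)
  have "wedge n t f S = wedge n t (f(m0 := A, m1 := B)) S"
  proof (rule wedge_unimodular_cols[OF m0(1) m1(1) m01])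
    show "f m0 = (\<lambda>r. ?g ?a ?a * A r + ?g ?b ?a * B r)" "f m1 = (\<lambda>r. ?g ?b ?b * B r + ?g ?a ?b * A r)"
      using block_prod_insert_col[OF gs K, of _ \<delta>] m0 m1 unfolding f_def A_def B_def by simp_all
    show "?g ?a ?a * ?g ?b ?b - ?g ?a ?b * ?g ?b ?a = 1"
      using L_sub_det[OF block_factorsD[OF gs K(2)]] .
  qed
  with F show "pl_block n t \<delta> ts gs (insert k K) v S = pl_block n t \<delta> ts gs K v S"
    unfolding pl_block_def f_def by simp
  have "pl_block n t \<delta> ts gs K (s_of ts k \<circ> v) S = wedge n t (f(m0 := A, m1 := B) \<circ> transpose m0 m1) S"
    unfolding pl_block_def f_def A_def B_def using m0 m1 m01 other
    by (auto intro!: wedge_cong simp: block_prod_insert_other s_of_other transpose_def)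
  then show "pl_block n t \<delta> ts gs K (s_of ts k \<circ> v) S = - pl_block n t \<delta> ts gs K v S"
    using wedge_swap[OF m0(1) m1(1) m01] F by simp
qed


lemma pl_block_reweight_row:
  assumes gs: "block_factors n ts gs" and K: "K \<subseteq> {0..<d}"
    and x: "\<forall>l\<in>K. x \<noteq> a_of ts l \<and> x \<noteq> b_of ts l"
    and \<delta>': "\<And>r. r \<noteq> x \<Longrightarrow> \<delta>' r = \<delta> r" and v: "inj v"
  shows "pl_block n t \<delta>' ts gs K v S * (if x \<in> v ` {1..t} then \<delta> x else 1)
       = pl_block n t \<delta> ts gs K v S * (if x \<in> v ` {1..t} then \<delta>' x else 1)"
proof -
  have row: "\<delta>' r * block_prod ts gs K r c = \<delta> r * block_prod ts gs K r c" if "c \<noteq> x" for r c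
    using block_prod_row_out[OF gs K x that] \<delta>' by (cases "r = x") simp_all
  show ?thesis
  proof (cases "x \<in> v ` {1..t}")
    case False
    then have "pl_block n t \<delta>' ts gs K v S = pl_block n t \<delta> ts gs K v S"
      unfolding pl_block_def by (intro wedge_cong) (metis row image_eqI)
    with False show ?thesis
      by simp
  next
    case True
    then obtain m0 where m0: "m0 \<in> {1..t}" "v m0 = x"
      by auto
    have other: "v m \<noteq> x" if "m \<noteq> m0" for m
      using injD[OF v] m0 that by metis
    define e where "e = (\<lambda>r. mat_id r x)"
    have "block_prod ts gs K r x = mat_id r x" for r
      using block_prod_col_out x by blast
    then have col: "(\<lambda>r. \<epsilon> r * block_prod ts gs K r (v m0)) = (\<lambda>r. \<epsilon> x * e r + 0 * e r)" for \<epsilon>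
      using m0 by (auto simp: fun_eq_iff mat_id_def e_def)
    have expand: "pl_block n t \<epsilon> ts gs K v S
        = \<epsilon> x * wedge n t ((\<lambda>m r. \<epsilon> r * block_prod ts gs K r (v m))(m0 := e)) S" for \<epsilon>
      unfolding pl_block_def
      using wedge_linear[where f = "\<lambda>m r. \<epsilon> r * block_prod ts gs K r (v m)" and A = e and B = e,
          OF m0(1) col]
      by simp
    have "wedge n t ((\<lambda>m r. \<delta> r * block_prod ts gs K r (v m))(m0 := e)) S
        = wedge n t ((\<lambda>m r. \<delta>' r * block_prod ts gs K r (v m))(m0 := e)) S"
      by (intro wedge_cong) (simp add: row other)
    then show ?thesis
      using True expand[of \<delta>] expand[of \<delta>'] by simp
  qed
qed

lemma pl_block_reweight_two_rows:
  assumes gs: "block_factors n ts gs" and K: "K \<subseteq> {0..<d}"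
    and x: "\<forall>l\<in>K. x \<noteq> a_of ts l \<and> x \<noteq> b_of ts l" and y: "\<forall>l\<in>K. y \<noteq> a_of ts l \<and> y \<noteq> b_of ts l"
    and "x \<noteq> y" and \<delta>': "\<And>r. r \<noteq> x \<Longrightarrow> r \<noteq> y \<Longrightarrow> \<delta>' r = \<delta> r" and v: "inj v"
  shows "pl_block n t \<delta>' ts gs K v S * (if x \<in> v ` {1..t} then \<delta> x else 1) * (if y \<in> v ` {1..t} then \<delta> y else 1)
       = pl_block n t \<delta> ts gs K v S * (if x \<in> v ` {1..t} then \<delta>' x else 1) * (if y \<in> v ` {1..t} then \<delta>' y else 1)"
proof -
  let ?\<mu> = "\<delta>(x := \<delta>' x)" and ?V = "v ` {1..t}"
  have "pl_block n t \<delta>' ts gs K v S * (if x \<in> ?V then \<delta> x else 1) * (if y \<in> ?V then \<delta> y else 1)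
      = (pl_block n t \<delta>' ts gs K v S * (if y \<in> ?V then ?\<mu> y else 1)) * (if x \<in> ?V then \<delta> x else 1)"
    using \<open>x \<noteq> y\<close> by (simp add: mult_ac)
  also have "pl_block n t \<delta>' ts gs K v S * (if y \<in> ?V then ?\<mu> y else 1)
      = pl_block n t ?\<mu> ts gs K v S * (if y \<in> ?V then \<delta>' y else 1)"
    using pl_block_reweight_row[OF gs K y _ v, of \<delta>' ?\<mu>] \<delta>' by simp
  also have "pl_block n t ?\<mu> ts gs K v S * (if y \<in> ?V then \<delta>' y else 1) * (if x \<in> ?V then \<delta> x else 1)
      = (pl_block n t ?\<mu> ts gs K v S * (if x \<in> ?V then \<delta> x else 1)) * (if y \<in> ?V then \<delta>' y else 1)"
    by (simp add: mult_ac)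
  also have "pl_block n t ?\<mu> ts gs K v S * (if x \<in> ?V then \<delta> x else 1)
      = pl_block n t \<delta> ts gs K v S * (if x \<in> ?V then \<delta>' x else 1)"
    using pl_block_reweight_row[OF gs K x _ v, of ?\<mu> \<delta>] by simp
  finally show ?thesis .
qed

end

text \<open>The diagonal of w t_i w\<inverse>, so that \<sigma>_i multiplies row r by sigma_diag q i w r.\<close>
definition sigma_diag :: "complex \<Rightarrow> nat \<Rightarrow> (nat \<Rightarrow> nat) \<Rightarrow> nat \<Rightarrow> complex" where
  "sigma_diag q i w r = (if r \<in> w ` {1..i} then 1 else q)"

definition separates :: "(nat \<times> nat) list \<Rightarrow> nat \<Rightarrow> (nat \<Rightarrow> nat) \<Rightarrow> nat \<Rightarrow> bool" where
  "separates ts k w t \<longleftrightarrow> (a_of ts k \<in> w ` {1..t} \<longleftrightarrow> b_of ts k \<notin> w ` {1..t})"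

lemma separates_iff_not_preserved:
  "a_of ts k \<noteq> b_of ts k \<Longrightarrow> separates ts k w t \<longleftrightarrow> s_of ts k ` w ` {1..t} \<noteq> w ` {1..t}"
  unfolding separates_def s_of_def by (simp add: transpose_image_neq_iff)

lemma sigma_diag_swap_nonseparating:
  "\<not> separates ts k v i \<Longrightarrow> sigma_diag q i (s_of ts k \<circ> v) = sigma_diag q i v"
  unfolding sigma_diag_def separates_def s_of_def image_comp[symmetric]
  by (subst transpose_image_eq) auto

context transposition_blocks
begin

lemma pl_block_insert_nonseparating:
  assumes gs: "block_factors n ts gs" and K: "K \<subseteq> {0..<d}" "k < d" "k \<notin> K" and v: "inj v"
    and nonsep: "\<not> separates ts k v t"
  shows "pl_block n t \<delta> ts gs (insert k K) v S = pl_block n t \<delta> ts gs K v S"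
    and "pl_block n t \<delta> ts gs K v S
           = (if a_of ts k \<in> v ` {1..t} then -1 else 1) * pl_block n t \<delta> ts gs K (s_of ts k \<circ> v) S"
proof -
  consider "a_of ts k \<in> v ` {1..t}" "b_of ts k \<in> v ` {1..t}"
    | "a_of ts k \<notin> v ` {1..t}" "b_of ts k \<notin> v ` {1..t}"
    using nonsep unfolding separates_def by blast
  then show "pl_block n t \<delta> ts gs (insert k K) v S = pl_block n t \<delta> ts gs K v S"
    and "pl_block n t \<delta> ts gs K v S
           = (if a_of ts k \<in> v ` {1..t} then -1 else 1) * pl_block n t \<delta> ts gs K (s_of ts k \<circ> v) S"
    by (cases; simp add: pl_block_insert_inside[OF gs K v] pl_block_insert_outside)+
qed

lemma pl_block_sigma_diag_swap:
  assumes gs: "block_factors n ts gs" and K: "K \<subseteq> {0..<d}" "k < d" "k \<notin> K" and v: "inj v"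
    and x: "x = a_of ts k \<or> x = b_of ts k" "x \<in> v ` {1..i}" "s_of ts k x \<notin> v ` {1..i}"
  shows "pl_block n t (sigma_diag q i v) ts gs K (s_of ts k \<circ> v) S * (if s_of ts k x \<in> v ` {1..t} then q else 1)
       = pl_block n t (sigma_diag q i (s_of ts k \<circ> v)) ts gs K (s_of ts k \<circ> v) S * (if x \<in> v ` {1..t} then q else 1)"
proof -
  let ?u = "s_of ts k \<circ> v" and ?y = "s_of ts k x"
  have u: "inj ?u"
    using v s_of_permutes[OF K(2)] by (simp add: inj_compose permutes_inj)
  have y: "?y = a_of ts k \<or> ?y = b_of ts k" and "x \<noteq> ?y"
    using x(1) transposition_in[OF K(2)] by auto
  have same: "sigma_diag q i v r = sigma_diag q i ?u r" if "r \<noteq> x" "r \<noteq> ?y" for r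
  proof -
    have "s_of ts k r = r"
      using that x(1) by (intro s_of_other) auto
    then show ?thesis
      unfolding sigma_diag_def using s_of_comp_image_iff[of r ts k v "{1..i}"] by simp
  qed
  have "sigma_diag q i ?u x = q" "sigma_diag q i ?u ?y = 1" "sigma_diag q i v x = 1" "sigma_diag q i v ?y = q"
    using x(2,3) s_of_comp_image_iff[of x ts k v] s_of_comp_image_iff[of ?y ts k v]
    unfolding sigma_diag_def by auto
  moreover have "x \<in> ?u ` {1..t} \<longleftrightarrow> ?y \<in> v ` {1..t}" "?y \<in> ?u ` {1..t} \<longleftrightarrow> x \<in> v ` {1..t}"
    using s_of_comp_image_iff[of x ts k v] s_of_comp_image_iff[of ?y ts k v] by simp_all
  moreover note pl_block_reweight_two_rows[where \<delta>' = "sigma_diag q i v" and \<delta> = "sigma_diag q i ?u"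
      and v = ?u and t = t and S = S, OF gs K(1) not_in_other_blocks[OF K(2,1,3) x(1)]
      not_in_other_blocks[OF K(2,1,3) y] \<open>x \<noteq> ?y\<close> same u]
  ultimately show ?thesis
    by (cases "x \<in> v ` {1..t}"; cases "?y \<in> v ` {1..t}") (simp_all add: mult.commute)
qed

end

section \<open>Cell tensors\<close>

abbreviation pl_plain :: "nat \<Rightarrow> nat \<Rightarrow> (nat \<times> nat) list \<Rightarrow> (nat \<Rightarrow> nat \<Rightarrow> complex) list
    \<Rightarrow> nat set \<Rightarrow> (nat \<Rightarrow> nat) \<Rightarrow> nat set \<Rightarrow> complex" where
  "pl_plain n i ts gs K v \<equiv> pl_block n i (\<lambda>_. 1) ts gs K v"

abbreviation pl_sigma :: "nat \<Rightarrow> complex \<Rightarrow> nat \<Rightarrow> nat \<Rightarrow> (nat \<times> nat) list \<Rightarrow> (nat \<Rightarrow> nat \<Rightarrow> complex) list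
    \<Rightarrow> nat set \<Rightarrow> (nat \<Rightarrow> nat) \<Rightarrow> nat set \<Rightarrow> complex" where
  "pl_sigma n q i j ts gs K v \<equiv> pl_block n j (sigma_diag q i v) ts gs K v"

text \<open>For K = all blocks and E = {} this is u \<otimes> v for the point g_1 ... g_d w of E(C);
  for K = {} it is q^(j - i) e_C for the subcell given by E.\<close>
definition cell_tensor :: "nat \<Rightarrow> complex \<Rightarrow> nat \<Rightarrow> nat \<Rightarrow> (nat \<times> nat) list \<Rightarrow> (nat \<Rightarrow> nat \<Rightarrow> complex) list
    \<Rightarrow> nat set \<Rightarrow> nat set \<Rightarrow> (nat \<Rightarrow> nat) \<Rightarrow> nat set \<times> nat set \<Rightarrow> complex" where
  "cell_tensor n q i j ts gs E K w = (\<lambda>(S, T). \<Sum>L\<in>Pow E. q ^ card L *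
     (pl_plain n i ts gs K (s_prod ts (E - L) \<circ> w) S * pl_sigma n q i j ts gs K (s_prod ts L \<circ> w) T))"

lemma cell_tensor_insert_termwise:
  assumes "\<And>L S T. L \<subseteq> E \<Longrightarrow>
      pl_plain n i ts gs (insert k K) (s_prod ts (E - L) \<circ> w) S * pl_sigma n q i j ts gs (insert k K) (s_prod ts L \<circ> w) T
      = c1 * (pl_plain n i ts gs K (s_prod ts (E - L) \<circ> w) S * pl_sigma n q i j ts gs K (s_prod ts L \<circ> w) T)
      + c2 * (pl_plain n i ts gs K (s_prod ts (E - L) \<circ> (s_of ts k \<circ> w)) S
              * pl_sigma n q i j ts gs K (s_prod ts L \<circ> (s_of ts k \<circ> w)) T)"
  shows "cell_tensor n q i j ts gs E (insert k K) w
       = (\<lambda>ST. c1 * cell_tensor n q i j ts gs E K w ST + c2 * cell_tensor n q i j ts gs E K (s_of ts k \<circ> w) ST)"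
  unfolding cell_tensor_def
  by (auto simp: assms sum_distrib_left sum.distrib algebra_simps intro!: sum.cong)

context transposition_blocks
begin

lemma separates_obtain:
  assumes "k < d" "separates ts k w t"
  obtains x where "x = a_of ts k \<or> x = b_of ts k" "x \<in> w ` {1..t}" "s_of ts k x \<notin> w ` {1..t}"
  using assms unfolding separates_def by (metis s_of_a s_of_b)

text \<open>The sets w{1..i} and w{1..j} are nested, so one element of the block lies in both.\<close>
lemma separates_both_obtain:
  assumes "k < d" "separates ts k w i" "separates ts k w j"
  obtains x where "x = a_of ts k \<or> x = b_of ts k" "x \<in> w ` {1..i}" "s_of ts k x \<notin> w ` {1..i}"
    "x \<in> w ` {1..j}" "s_of ts k x \<notin> w ` {1..j}"
proof -
  obtain x where x: "x = a_of ts k \<or> x = b_of ts k" "x \<in> w ` {1..i}" "s_of ts k x \<notin> w ` {1..i}"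
    using separates_obtain[OF assms(1,2)] .
  have j: "x \<in> w ` {1..j} \<longleftrightarrow> s_of ts k x \<notin> w ` {1..j}"
    using x(1) assms(3) unfolding separates_def by (elim disjE) simp_all
  have "x \<in> w ` {1..j}"
  proof (cases "i \<le> j")
    case False
    then have "w ` {1..j} \<subseteq> w ` {1..i}"
      by (intro image_mono) auto
    then show ?thesis
      using j x(3) by blast
  qed (use x(2) in auto)
  with x j that show thesis
    by blast
qed

lemma inj_s_prod_comp: "A \<subseteq> {0..<d} \<Longrightarrow> inj w \<Longrightarrow> inj (s_prod ts A \<circ> w)"
  by (rule inj_compose[OF permutes_inj[OF s_prod_permutes]])

lemma separates_s_prod_comp:
  "A \<subseteq> {0..<d} \<Longrightarrow> k < d \<Longrightarrow> k \<notin> A \<Longrightarrow> separates ts k (s_prod ts A \<circ> w) t \<longleftrightarrow> separates ts k w t"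
  unfolding separates_def
  using s_prod_comp_image_iff[of A k "a_of ts k" w] s_prod_comp_image_iff[of A k "b_of ts k" w] by simp

lemma s_of_s_prod_comp:
  "A \<subseteq> {0..<d} \<Longrightarrow> k < d \<Longrightarrow> k \<notin> A \<Longrightarrow> s_of ts k \<circ> (s_prod ts A \<circ> w) = s_prod ts A \<circ> (s_of ts k \<circ> w)"
  using s_prod_s_of_commute by (simp add: o_assoc)

lemma pl_sigma_insert_separating:
  assumes gs: "block_factors n ts gs" and K: "K \<subseteq> {0..<d}" "k < d" "k \<notin> K" and v: "inj v"
    and x: "x = a_of ts k \<or> x = b_of ts k" "x \<in> v ` {1..i}" "s_of ts k x \<notin> v ` {1..i}"
      "x \<in> v ` {1..j}" "s_of ts k x \<notin> v ` {1..j}"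
  shows "pl_sigma n q i j ts gs (insert k K) v T = (gs ! k) x x * pl_sigma n q i j ts gs K v T
      + q * (gs ! k) (s_of ts k x) x * pl_sigma n q i j ts gs K (s_of ts k \<circ> v) T"
  using pl_block_insert_split[OF gs K v x(1,4,5), where \<delta> = "sigma_diag q i v" and S = T]
    pl_block_sigma_diag_swap[OF gs K v x(1-3), where t = j and S = T and q = q] x(4,5)
  by (simp add: mult.commute)

lemma pl_sigma_insert_separating_j_only:
  assumes gs: "block_factors n ts gs" and K: "K \<subseteq> {0..<d}" "k < d" "k \<notin> K" and v: "inj v"
    and i: "\<not> separates ts k v i"
    and x: "x = a_of ts k \<or> x = b_of ts k" "x \<in> v ` {1..j}" "s_of ts k x \<notin> v ` {1..j}"
  shows "pl_sigma n q i j ts gs (insert k K) v T = (gs ! k) x x * pl_sigma n q i j ts gs K v T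
      + (gs ! k) (s_of ts k x) x * pl_sigma n q i j ts gs K (s_of ts k \<circ> v) T"
  using pl_block_insert_split[OF gs K v x, where \<delta> = "sigma_diag q i v" and S = T]
  by (simp add: sigma_diag_swap_nonseparating[OF i])

lemma pl_sigma_insert_separating_i_only:
  assumes gs: "block_factors n ts gs" and K: "K \<subseteq> {0..<d}" "k < d" "k \<notin> K" and v: "inj v"
    and "q \<noteq> 0" and x: "x = a_of ts k \<or> x = b_of ts k" "x \<in> v ` {1..i}" "s_of ts k x \<notin> v ` {1..i}"
    and j: "\<not> separates ts k v j"
  shows "pl_sigma n q i j ts gs (insert k K) v T = pl_sigma n q i j ts gs K v T"
    and "pl_sigma n q i j ts gs K v T
       = (if a_of ts k \<in> v ` {1..j} then -1 else 1) * pl_sigma n q i j ts gs K (s_of ts k \<circ> v) T"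
proof -
  show "pl_sigma n q i j ts gs (insert k K) v T = pl_sigma n q i j ts gs K v T"
    by (rule pl_block_insert_nonseparating(1)[OF gs K v j])
  have "x \<in> v ` {1..j} \<longleftrightarrow> s_of ts k x \<in> v ` {1..j}"
    using x(1) j unfolding separates_def by (elim disjE) simp_all
  then have "pl_block n j (sigma_diag q i v) ts gs K (s_of ts k \<circ> v) T = pl_sigma n q i j ts gs K (s_of ts k \<circ> v) T"
    using pl_block_sigma_diag_swap[OF gs K v x, where t = j and S = T and q = q] \<open>q \<noteq> 0\<close>
    by (auto split: if_splits)
  then show "pl_sigma n q i j ts gs K v T
       = (if a_of ts k \<in> v ` {1..j} then -1 else 1) * pl_sigma n q i j ts gs K (s_of ts k \<circ> v) T"
    using pl_block_insert_nonseparating(2)[OF gs K v j, where \<delta> = "sigma_diag q i v" and S = T]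
    by simp
qed


lemma cell_tensor_insert_bilinear:
  assumes k: "k < d" and E: "E \<subseteq> {0..<d}" "k \<notin> E"
    and U: "\<And>A. A \<subseteq> E \<Longrightarrow> pl_plain n i ts gs K' (s_prod ts A \<circ> w) S
      = a * pl_plain n i ts gs K (s_prod ts A \<circ> w) S + c * pl_plain n i ts gs K (s_prod ts A \<circ> (s_of ts k \<circ> w)) S"
    and V: "\<And>A. A \<subseteq> E \<Longrightarrow> pl_sigma n q i j ts gs K' (s_prod ts A \<circ> w) T
      = a * pl_sigma n q i j ts gs K (s_prod ts A \<circ> w) T
        + q * c * pl_sigma n q i j ts gs K (s_prod ts A \<circ> (s_of ts k \<circ> w)) T"
  shows "cell_tensor n q i j ts gs E K' w (S, T)
     = a\<^sup>2 * cell_tensor n q i j ts gs E K w (S, T) + a * c * cell_tensor n q i j ts gs (insert k E) K w (S, T)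
     + q * c\<^sup>2 * cell_tensor n q i j ts gs E K (s_of ts k \<circ> w) (S, T)"
proof -
  let ?s = "s_of ts k"
  define U where "U K v = pl_plain n i ts gs K v S" for K v
  define V where "V K v = pl_sigma n q i j ts gs K v T" for K v
  have expand: "q ^ card L * (U K' (s_prod ts (E - L) \<circ> w) * V K' (s_prod ts L \<circ> w))
     = a\<^sup>2 * (q ^ card L * (U K (s_prod ts (E - L) \<circ> w) * V K (s_prod ts L \<circ> w)))
     + a * c * ((q ^ card L * (U K (s_prod ts (insert k E - L) \<circ> w) * V K (s_prod ts L \<circ> w)))
         + (q ^ card (insert k L) * (U K (s_prod ts (insert k E - insert k L) \<circ> w)
              * V K (s_prod ts (insert k L) \<circ> w))))
     + q * c\<^sup>2 * (q ^ card L * (U K (s_prod ts (E - L) \<circ> (?s \<circ> w)) * V K (s_prod ts L \<circ> (?s \<circ> w))))"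
    if "L \<in> Pow E" for L
  proof -
    have L: "L \<subseteq> {0..<d}" "k \<notin> L" "E - L \<subseteq> {0..<d}" "k \<notin> E - L" "finite L"
      using that E finite_subset[of L E] finite_subset[OF E(1)] by auto
    have "s_prod ts (insert k E - L) \<circ> w = s_prod ts (E - L) \<circ> (?s \<circ> w)"
      using s_prod_insert[OF L(3) k L(4)] s_of_s_prod_comp[OF L(3) k L(4)] E(2) L(2)
      by (simp add: insert_Diff_if o_assoc)
    moreover have "s_prod ts (insert k L) \<circ> w = s_prod ts L \<circ> (?s \<circ> w)"
      using s_prod_insert[OF L(1) k L(2)] s_of_s_prod_comp[OF L(1) k L(2)] by (simp add: o_assoc)
    moreover have "insert k E - insert k L = E - L" "card (insert k L) = Suc (card L)"
      using E(2) L(2,5) by auto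
    ultimately show ?thesis
      using U[of "E - L"] V[of L] that unfolding U_def V_def by (simp add: algebra_simps power2_eq_square)
  qed
  have "cell_tensor n q i j ts gs E K' w (S, T)
      = (\<Sum>L\<in>Pow E. q ^ card L * (U K' (s_prod ts (E - L) \<circ> w) * V K' (s_prod ts L \<circ> w)))"
    unfolding cell_tensor_def U_def V_def by simp
  also have "\<dots> = a\<^sup>2 * (\<Sum>L\<in>Pow E. q ^ card L * (U K (s_prod ts (E - L) \<circ> w) * V K (s_prod ts L \<circ> w)))
     + a * c * ((\<Sum>L\<in>Pow E. q ^ card L * (U K (s_prod ts (insert k E - L) \<circ> w) * V K (s_prod ts L \<circ> w)))
         + (\<Sum>L\<in>Pow E. q ^ card (insert k L) * (U K (s_prod ts (insert k E - insert k L) \<circ> w)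
              * V K (s_prod ts (insert k L) \<circ> w))))
     + q * c\<^sup>2 * (\<Sum>L\<in>Pow E. q ^ card L
         * (U K (s_prod ts (E - L) \<circ> (?s \<circ> w)) * V K (s_prod ts L \<circ> (?s \<circ> w))))"
    by (subst sum.cong[OF refl expand], assumption) (simp only: sum.distrib sum_distrib_left distrib_left)
  also have "(\<Sum>L\<in>Pow E. q ^ card L * (U K (s_prod ts (insert k E - L) \<circ> w) * V K (s_prod ts L \<circ> w)))
         + (\<Sum>L\<in>Pow E. q ^ card (insert k L) * (U K (s_prod ts (insert k E - insert k L) \<circ> w)
              * V K (s_prod ts (insert k L) \<circ> w)))
      = cell_tensor n q i j ts gs (insert k E) K w (S, T)"
    unfolding cell_tensor_def U_def V_def case_prod_conv
    by (rule sum_Pow_insert[OF finite_subset[OF E(1) finite_atLeastLessThan] E(2), symmetric])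
  finally show ?thesis
    unfolding cell_tensor_def U_def V_def by simp
qed

lemma cell_tensor_insert_separating:
  assumes gs: "block_factors n ts gs" and K: "K \<subseteq> {0..<d}" "k < d" "k \<notin> K"
    and E: "E \<subseteq> {0..<d}" "k \<notin> E" and w: "inj w"
    and x: "x = a_of ts k \<or> x = b_of ts k" "x \<in> w ` {1..i}" "s_of ts k x \<notin> w ` {1..i}"
      "x \<in> w ` {1..j}" "s_of ts k x \<notin> w ` {1..j}"
  shows "cell_tensor n q i j ts gs E (insert k K) w ST
     = ((gs ! k) x x)\<^sup>2 * cell_tensor n q i j ts gs E K w ST
     + (gs ! k) x x * (gs ! k) (s_of ts k x) x * cell_tensor n q i j ts gs (insert k E) K w ST
     + q * ((gs ! k) (s_of ts k x) x)\<^sup>2 * cell_tensor n q i j ts gs E K (s_of ts k \<circ> w) ST"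
proof -
  obtain S T where ST: "ST = (S, T)"
    by (cases ST)
  have y: "s_of ts k x = a_of ts k \<or> s_of ts k x = b_of ts k"
    using x(1) by auto
  show ?thesis
    unfolding ST
  proof (rule cell_tensor_insert_bilinear[OF K(2) E])
    fix A assume "A \<subseteq> E"
    then have A: "A \<subseteq> {0..<d}" "k \<notin> A"
      using E by auto
    note mem = s_prod_comp_image_iff[OF A(1) K(2) A(2)]
    show "pl_plain n i ts gs (insert k K) (s_prod ts A \<circ> w) S
        = (gs ! k) x x * pl_plain n i ts gs K (s_prod ts A \<circ> w) S
          + (gs ! k) (s_of ts k x) x * pl_plain n i ts gs K (s_prod ts A \<circ> (s_of ts k \<circ> w)) S"
      unfolding s_of_s_prod_comp[OF A(1) K(2) A(2), symmetric]
      by (rule pl_block_insert_split[OF gs K inj_s_prod_comp[OF A(1) w] x(1)])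
        (use x mem[OF x(1), of w "{1..i}"] mem[OF y, of w "{1..i}"] in auto)
    show "pl_sigma n q i j ts gs (insert k K) (s_prod ts A \<circ> w) T
        = (gs ! k) x x * pl_sigma n q i j ts gs K (s_prod ts A \<circ> w) T
          + q * (gs ! k) (s_of ts k x) x * pl_sigma n q i j ts gs K (s_prod ts A \<circ> (s_of ts k \<circ> w)) T"
      unfolding s_of_s_prod_comp[OF A(1) K(2) A(2), symmetric]
      by (rule pl_sigma_insert_separating[OF gs K inj_s_prod_comp[OF A(1) w] x(1)])
        (use x mem[OF x(1), of w "{1..i}"] mem[OF y, of w "{1..i}"]
          mem[OF x(1), of w "{1..j}"] mem[OF y, of w "{1..j}"] in auto)
  qed
qed

lemma cell_tensor_insert_separating_i_only:
  assumes gs: "block_factors n ts gs" and K: "K \<subseteq> {0..<d}" "k < d" "k \<notin> K"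
    and E: "E \<subseteq> {0..<d}" "k \<notin> E" and w: "inj w" and "q \<noteq> 0"
    and x: "x = a_of ts k \<or> x = b_of ts k" "x \<in> w ` {1..i}" "s_of ts k x \<notin> w ` {1..i}"
    and j: "\<not> separates ts k w j"
  shows "cell_tensor n q i j ts gs E (insert k K) w
     = (\<lambda>ST. (gs ! k) x x * cell_tensor n q i j ts gs E K w ST
          + (gs ! k) (s_of ts k x) x * (if a_of ts k \<in> w ` {1..j} then -1 else 1)
            * cell_tensor n q i j ts gs E K (s_of ts k \<circ> w) ST)"
proof (rule cell_tensor_insert_termwise)
  fix L S T assume "L \<subseteq> E"
  then have A: "E - L \<subseteq> {0..<d}" "k \<notin> E - L" "L \<subseteq> {0..<d}" "k \<notin> L"
    using E by auto
  have y: "s_of ts k x = a_of ts k \<or> s_of ts k x = b_of ts k"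
    using x(1) by auto
  note mem = s_prod_comp_image_iff[OF A(1) K(2) A(2)] s_prod_comp_image_iff[OF A(3) K(2) A(4)]
  have "pl_plain n i ts gs (insert k K) (s_prod ts (E - L) \<circ> w) S
      = (gs ! k) x x * pl_plain n i ts gs K (s_prod ts (E - L) \<circ> w) S
        + (gs ! k) (s_of ts k x) x * pl_plain n i ts gs K (s_prod ts (E - L) \<circ> (s_of ts k \<circ> w)) S"
    unfolding s_of_s_prod_comp[OF A(1) K(2) A(2), symmetric]
    by (rule pl_block_insert_split[OF gs K inj_s_prod_comp[OF A(1) w] x(1)])
      (use x mem(1)[OF x(1), of w "{1..i}"] mem(1)[OF y, of w "{1..i}"] in auto)
  moreover have v: "x \<in> (s_prod ts L \<circ> w) ` {1..i}" "s_of ts k x \<notin> (s_prod ts L \<circ> w) ` {1..i}"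
      "\<not> separates ts k (s_prod ts L \<circ> w) j"
    using x mem(2)[OF x(1), of w "{1..i}"] mem(2)[OF y, of w "{1..i}"]
      j separates_s_prod_comp[OF A(3) K(2) A(4)]
    by auto
  moreover note pl_sigma_insert_separating_i_only[OF gs K inj_s_prod_comp[OF A(3) w] \<open>q \<noteq> 0\<close> x(1) v,
      where T = T]
  moreover have "a_of ts k \<in> (s_prod ts L \<circ> w) ` {1..j} \<longleftrightarrow> a_of ts k \<in> w ` {1..j}"
    using mem(2)[of "a_of ts k" w "{1..j}"] by simp
  ultimately show "pl_plain n i ts gs (insert k K) (s_prod ts (E - L) \<circ> w) S
      * pl_sigma n q i j ts gs (insert k K) (s_prod ts L \<circ> w) T
    = (gs ! k) x x * (pl_plain n i ts gs K (s_prod ts (E - L) \<circ> w) S * pl_sigma n q i j ts gs K (s_prod ts L \<circ> w) T)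
      + (gs ! k) (s_of ts k x) x * (if a_of ts k \<in> w ` {1..j} then -1 else 1)
        * (pl_plain n i ts gs K (s_prod ts (E - L) \<circ> (s_of ts k \<circ> w)) S
           * pl_sigma n q i j ts gs K (s_prod ts L \<circ> (s_of ts k \<circ> w)) T)"
    using s_of_s_prod_comp[OF A(3) K(2) A(4), of w] by (simp add: algebra_simps)
qed

lemma cell_tensor_insert_separating_j_only:
  assumes gs: "block_factors n ts gs" and K: "K \<subseteq> {0..<d}" "k < d" "k \<notin> K"
    and E: "E \<subseteq> {0..<d}" "k \<notin> E" and w: "inj w"
    and i: "\<not> separates ts k w i"
    and x: "x = a_of ts k \<or> x = b_of ts k" "x \<in> w ` {1..j}" "s_of ts k x \<notin> w ` {1..j}"
  shows "cell_tensor n q i j ts gs E (insert k K) w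
     = (\<lambda>ST. (gs ! k) x x * cell_tensor n q i j ts gs E K w ST
          + (gs ! k) (s_of ts k x) x * (if a_of ts k \<in> w ` {1..i} then -1 else 1)
            * cell_tensor n q i j ts gs E K (s_of ts k \<circ> w) ST)"
proof (rule cell_tensor_insert_termwise)
  fix L S T assume "L \<subseteq> E"
  then have A: "E - L \<subseteq> {0..<d}" "k \<notin> E - L" "L \<subseteq> {0..<d}" "k \<notin> L"
    using E by auto
  have y: "s_of ts k x = a_of ts k \<or> s_of ts k x = b_of ts k"
    using x(1) by auto
  note mem = s_prod_comp_image_iff[OF A(1) K(2) A(2)] s_prod_comp_image_iff[OF A(3) K(2) A(4)]
  have "\<not> separates ts k (s_prod ts (E - L) \<circ> w) i" "\<not> separates ts k (s_prod ts L \<circ> w) i"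
    using i separates_s_prod_comp[OF A(1) K(2) A(2)] separates_s_prod_comp[OF A(3) K(2) A(4)] by auto
  note U = pl_block_insert_nonseparating[OF gs K inj_s_prod_comp[OF A(1) w] this(1), where S = S]
  have "pl_sigma n q i j ts gs (insert k K) (s_prod ts L \<circ> w) T
      = (gs ! k) x x * pl_sigma n q i j ts gs K (s_prod ts L \<circ> w) T
        + (gs ! k) (s_of ts k x) x * pl_sigma n q i j ts gs K (s_prod ts L \<circ> (s_of ts k \<circ> w)) T"
    unfolding s_of_s_prod_comp[OF A(3) K(2) A(4), symmetric]
    by (rule pl_sigma_insert_separating_j_only[OF gs K inj_s_prod_comp[OF A(3) w] \<open>\<not> separates ts k (s_prod ts L \<circ> w) i\<close> x(1)])
      (use x mem(2)[OF x(1), of w "{1..j}"] mem(2)[OF y, of w "{1..j}"] in auto)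
  moreover have "a_of ts k \<in> (s_prod ts (E - L) \<circ> w) ` {1..i} \<longleftrightarrow> a_of ts k \<in> w ` {1..i}"
    using mem(1)[of "a_of ts k" w "{1..i}"] by simp
  ultimately show "pl_plain n i ts gs (insert k K) (s_prod ts (E - L) \<circ> w) S
      * pl_sigma n q i j ts gs (insert k K) (s_prod ts L \<circ> w) T
    = (gs ! k) x x * (pl_plain n i ts gs K (s_prod ts (E - L) \<circ> w) S * pl_sigma n q i j ts gs K (s_prod ts L \<circ> w) T)
      + (gs ! k) (s_of ts k x) x * (if a_of ts k \<in> w ` {1..i} then -1 else 1)
        * (pl_plain n i ts gs K (s_prod ts (E - L) \<circ> (s_of ts k \<circ> w)) S
           * pl_sigma n q i j ts gs K (s_prod ts L \<circ> (s_of ts k \<circ> w)) T)"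
    using U s_of_s_prod_comp[OF A(1) K(2) A(2), of w] by (simp add: algebra_simps)
qed

lemma cell_tensor_insert_nonseparating:
  assumes gs: "block_factors n ts gs" and K: "K \<subseteq> {0..<d}" "k < d" "k \<notin> K"
    and E: "E \<subseteq> {0..<d}" "k \<notin> E" and w: "inj w"
    and i: "\<not> separates ts k w i" and j: "\<not> separates ts k w j"
  shows "cell_tensor n q i j ts gs E (insert k K) w = cell_tensor n q i j ts gs E K w"
proof -
  have "cell_tensor n q i j ts gs E (insert k K) w
     = (\<lambda>ST. 1 * cell_tensor n q i j ts gs E K w ST + 0 * cell_tensor n q i j ts gs E K (s_of ts k \<circ> w) ST)"
  proof (rule cell_tensor_insert_termwise)
  fix L S T assume "L \<subseteq> E"
  then have A: "E - L \<subseteq> {0..<d}" "k \<notin> E - L" "L \<subseteq> {0..<d}" "k \<notin> L"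
    using E by auto
  have "\<not> separates ts k (s_prod ts (E - L) \<circ> w) i" "\<not> separates ts k (s_prod ts L \<circ> w) j"
    using i j separates_s_prod_comp[OF A(1) K(2) A(2)] separates_s_prod_comp[OF A(3) K(2) A(4)] by auto
  then show "pl_plain n i ts gs (insert k K) (s_prod ts (E - L) \<circ> w) S
      * pl_sigma n q i j ts gs (insert k K) (s_prod ts L \<circ> w) T
    = 1 * (pl_plain n i ts gs K (s_prod ts (E - L) \<circ> w) S * pl_sigma n q i j ts gs K (s_prod ts L \<circ> w) T)
      + 0 * (pl_plain n i ts gs K (s_prod ts (E - L) \<circ> (s_of ts k \<circ> w)) S
           * pl_sigma n q i j ts gs K (s_prod ts L \<circ> (s_of ts k \<circ> w)) T)"
    using pl_block_insert_nonseparating(1)[OF gs K inj_s_prod_comp[OF A(1) w]]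
      pl_block_insert_nonseparating(1)[OF gs K inj_s_prod_comp[OF A(3) w]] by simp
  qed
  then show ?thesis
    by (simp add: fun_eq_iff)
qed

lemma cell_tensor_insert_not_separating_both:
  assumes gs: "block_factors n ts gs" and K: "K \<subseteq> {0..<d}" "k < d" "k \<notin> K"
    and E: "E \<subseteq> {0..<d}" "k \<notin> E" and w: "inj w" and "q \<noteq> 0"
    and not_both: "\<not> (separates ts k w i \<and> separates ts k w j)"
  obtains c1 c2 where "cell_tensor n q i j ts gs E (insert k K) w
     = (\<lambda>ST. c1 * cell_tensor n q i j ts gs E K w ST + c2 * cell_tensor n q i j ts gs E K (s_of ts k \<circ> w) ST)"
proof -
  consider "separates ts k w i" "\<not> separates ts k w j" | "\<not> separates ts k w i" "separates ts k w j"
    | "\<not> separates ts k w i" "\<not> separates ts k w j"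
    using not_both by blast
  then show thesis
  proof cases
    case 1
    then obtain x where "x = a_of ts k \<or> x = b_of ts k" "x \<in> w ` {1..i}" "s_of ts k x \<notin> w ` {1..i}"
      using separates_obtain[OF K(2)] by blast
    from cell_tensor_insert_separating_i_only[OF gs K E w \<open>q \<noteq> 0\<close> this 1(2)] that show thesis
      by blast
  next
    case 2
    then obtain x where "x = a_of ts k \<or> x = b_of ts k" "x \<in> w ` {1..j}" "s_of ts k x \<notin> w ` {1..j}"
      using separates_obtain[OF K(2)] by blast
    from cell_tensor_insert_separating_j_only[OF gs K E w 2(1) this] that show thesis
      by blast
  next
    case 3
    from cell_tensor_insert_nonseparating[OF gs K E w 3] that[of 1 0] show thesis
      by simp
  qed
qed

end

lemma bij_betw_sorted_list_of_set_nth: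
  "finite E \<Longrightarrow> bij_betw ((!) (sorted_list_of_set E)) {0..<card E} E"
  by (intro bij_betw_nth) auto

definition subcell :: "(nat \<times> nat) list \<Rightarrow> nat set \<Rightarrow> (nat \<times> nat) list" where
  "subcell ts E = map (\<lambda>k. ts ! k) (sorted_list_of_set E)"

lemma prod_if_le_eq_power: "(\<Prod>m\<in>{1..j}. if m \<le> i then 1 else q) = (q :: complex) ^ (j - i)"
proof (induction j)
  case (Suc j)
  have "{1..Suc j} = insert (Suc j) {1..j}"
    by auto
  with Suc show ?case
    by (cases "Suc j \<le> i") (auto simp: Suc_diff_le)
qed simp

context transposition_blocks
begin

lemma
  assumes "E \<subseteq> {0..<d}"
  shows subcell_length: "length (subcell ts E) = card E"
    and subcell_nth: "l < card E \<Longrightarrow> subcell ts E ! l = ts ! (sorted_list_of_set E ! l)"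
    and subcell_index: "l < card E \<Longrightarrow> sorted_list_of_set E ! l \<in> E"
  using assms finite_subset[OF assms] bij_betw_apply[OF bij_betw_sorted_list_of_set_nth]
  by (auto simp: subcell_def)

lemma disjoint_transpositions_subcell:
  assumes E: "E \<subseteq> {0..<d}"
  shows "disjoint_transpositions n (subcell ts E)"
proof -
  let ?ks = "sorted_list_of_set E"
  have inj: "inj_on ((!) ?ks) {0..<card E}"
    using bij_betw_sorted_list_of_set_nth[OF finite_subset[OF E]] bij_betw_imp_inj_on by blast
  have kd: "?ks ! k < d" if "k < card E" for k
    using subcell_index[OF E that] E by auto
  show ?thesis
    unfolding disjoint_transpositions_def subcell_length[OF E]
  proof (rule conjI; intro allI impI)
    fix k assume k: "k < card E"
    show "fst (subcell ts E ! k) \<in> {1..n} \<and> snd (subcell ts E ! k) \<in> {1..n}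
        \<and> fst (subcell ts E ! k) \<noteq> snd (subcell ts E ! k)"
      using transposition_in[OF kd[OF k]] unfolding subcell_nth[OF E k] a_of_def b_of_def by simp
  next
    fix k l assume kl: "k < card E" "l < card E" "k \<noteq> l"
    then have "?ks ! k \<noteq> ?ks ! l"
      using inj by (auto dest: inj_onD)
    then show "{fst (subcell ts E ! k), snd (subcell ts E ! k)} \<inter> {fst (subcell ts E ! l), snd (subcell ts E ! l)} = {}"
      using transpositions_disjoint[OF kd[OF kl(1)] kd[OF kl(2)]]
      unfolding subcell_nth[OF E kl(1)] subcell_nth[OF E kl(2)] a_of_def b_of_def by auto
  qed
qed

lemma s_prod_subcell:
  assumes E: "E \<subseteq> {0..<d}"
  shows "L \<subseteq> {0..<card E} \<Longrightarrow> s_prod (subcell ts E) L = s_prod ts ((!) (sorted_list_of_set E) ` L)"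
proof (induction L rule: infinite_finite_induct)
  case (insert l L)
  interpret sub: transposition_blocks n "subcell ts E"
    by (rule transposition_blocks.intro[OF disjoint_transpositions_subcell[OF E]])
  let ?ks = "sorted_list_of_set E"
  have inj: "inj_on ((!) ?ks) {0..<card E}"
    using bij_betw_sorted_list_of_set_nth[OF finite_subset[OF E]] bij_betw_imp_inj_on by blast
  have l: "l < card E" "L \<subseteq> {0..<card E}"
    using insert by auto
  have "s_prod (subcell ts E) (insert l L) = s_of (subcell ts E) l \<circ> s_prod (subcell ts E) L"
    using sub.s_prod_insert[of L l] l insert(2) subcell_length[OF E] by simp
  also have "s_of (subcell ts E) l = s_of ts (?ks ! l)"
    unfolding s_of_def a_of_def b_of_def subcell_nth[OF E l(1)] ..
  also have "s_prod (subcell ts E) L = s_prod ts ((!) ?ks ` L)"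
    using insert l by simp
  also have "s_of ts (?ks ! l) \<circ> s_prod ts ((!) ?ks ` L) = s_prod ts (insert (?ks ! l) ((!) ?ks ` L))"
  proof (rule s_prod_insert[symmetric])
    show "(!) ?ks ` L \<subseteq> {0..<d}" "?ks ! l < d"
      using subcell_index[OF E] l E by fastforce+
    show "?ks ! l \<notin> (!) ?ks ` L"
      using inj l insert(2) by (auto dest: inj_onD)
  qed
  finally show ?case
    by simp
qed (auto dest: finite_subset)

lemma e_C_subcell:
  assumes E: "E \<subseteq> {0..<d}"
  shows "e_C n q i j (subcell ts E) w (S, T)
    = (\<Sum>L\<in>Pow E. q ^ card L * (e_w n i (s_prod ts (E - L) \<circ> w) S * e_w n j (s_prod ts L \<circ> w) T))"
proof -
  let ?h = "image ((!) (sorted_list_of_set E))"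
  have bij: "bij_betw ((!) (sorted_list_of_set E)) {0..<card E} E"
    by (rule bij_betw_sorted_list_of_set_nth[OF finite_subset[OF E]]) simp
  have "e_C n q i j (subcell ts E) w (S, T) = (\<Sum>L\<in>Pow {0..<card E}. q ^ card L
      * (e_w n i (s_prod (subcell ts E) ({0..<card E} - L) \<circ> w) S * e_w n j (s_prod (subcell ts E) L \<circ> w) T))"
    by (simp add: e_C_def sum_fun_apply tensor_def subcell_length[OF E])
  also have "\<dots> = (\<Sum>L\<in>Pow {0..<card E}. q ^ card (?h L)
      * (e_w n i (s_prod ts (E - ?h L) \<circ> w) S * e_w n j (s_prod ts (?h L) \<circ> w) T))"
  proof (rule sum.cong[OF refl])
    fix L assume L: "L \<in> Pow {0..<card E}"
    have "card (?h L) = card L"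
      using L card_image[OF inj_on_subset[OF bij_betw_imp_inj_on[OF bij]]] by blast
    moreover have "?h ({0..<card E} - L) = E - ?h L"
      using inj_on_image_set_diff[OF bij_betw_imp_inj_on[OF bij], of "{0..<card E}" L] L
        bij_betw_imp_surj_on[OF bij]
      by auto
    moreover have "s_prod (subcell ts E) L = s_prod ts (?h L)"
      "s_prod (subcell ts E) ({0..<card E} - L) = s_prod ts (?h ({0..<card E} - L))"
      using L by (auto intro: s_prod_subcell[OF E])
    ultimately show "q ^ card L * (e_w n i (s_prod (subcell ts E) ({0..<card E} - L) \<circ> w) S
          * e_w n j (s_prod (subcell ts E) L \<circ> w) T)
        = q ^ card (?h L) * (e_w n i (s_prod ts (E - ?h L) \<circ> w) S * e_w n j (s_prod ts (?h L) \<circ> w) T)"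
      by simp
  qed
  also have "\<dots> = (\<Sum>L\<in>Pow E. q ^ card L * (e_w n i (s_prod ts (E - L) \<circ> w) S * e_w n j (s_prod ts L \<circ> w) T))"
    by (rule sum.reindex_bij_betw[OF bij_betw_image_Pow[OF bij]])
  finally show ?thesis .
qed

lemma monogressive_subcell:
  assumes mono: "monogressive n ts w0" and E: "E \<subseteq> {0..<d}" and M: "M \<subseteq> {0..<d}" and "E \<inter> M = {}"
  shows "monogressive n (subcell ts E) (s_prod ts M \<circ> w0)"
  unfolding monogressive_def is_orthocell_iff
proof (intro conjI allI impI)
  show "s_prod ts M \<circ> w0 permutes {1..n}"
    using permutes_compose[OF monogressiveD(1)[OF mono] s_prod_permutes[OF M]] .
  show "disjoint_transpositions n (subcell ts E)"
    by (rule disjoint_transpositions_subcell[OF E])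
  fix L assume "L \<subseteq> {0..<length (subcell ts E)}"
  then have L: "L \<subseteq> {0..<card E}"
    using subcell_length[OF E] by simp
  let ?h = "(!) (sorted_list_of_set E) ` L"
  have bij: "bij_betw ((!) (sorted_list_of_set E)) {0..<card E} E"
    by (rule bij_betw_sorted_list_of_set_nth[OF finite_subset[OF E]]) simp
  have hL: "?h \<subseteq> E" "card ?h = card L"
    using L bij card_image[OF inj_on_subset[OF bij_betw_imp_inj_on[OF bij] L]]
    by (auto simp: bij_betw_def)
  have "s_prod ts (?h \<union> M) = s_prod ts ?h \<circ> s_prod ts M"
    using hL(1) E M \<open>E \<inter> M = {}\<close> by (intro s_prod_union) auto
  then have "s_prod (subcell ts E) L \<circ> (s_prod ts M \<circ> w0) = s_prod ts (?h \<union> M) \<circ> w0"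
    by (simp add: s_prod_subcell[OF E L] o_assoc)
  moreover have "card (?h \<union> M) = card L + card M"
    using hL \<open>E \<inter> M = {}\<close> finite_subset[OF M] finite_subset[OF hL(1) finite_subset[OF E]]
    by (subst card_Un_disjoint) auto
  ultimately show "perm_length n (s_prod (subcell ts E) L \<circ> (s_prod ts M \<circ> w0))
      = perm_length n (s_prod ts M \<circ> w0) + card L"
    using monogressiveD(3)[OF mono, of "?h \<union> M"] monogressiveD(3)[OF mono M] hL(1) E M by auto
qed

lemma ij_effective_subcell:
  assumes mono: "monogressive n ts w0" and E: "E \<subseteq> {0..<d}" and M: "M \<subseteq> {0..<d}" and "E \<inter> M = {}"
    and sep: "\<forall>k\<in>E. separates ts k (s_prod ts M \<circ> w0) i \<and> separates ts k (s_prod ts M \<circ> w0) j"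
  shows "ij_effective n i j (subcell ts E) (s_prod ts M \<circ> w0)"
  unfolding ij_effective_def
proof (intro conjI monogressive_subcell[OF assms(1-4)] allI impI ballI)
  fix k m assume k: "k < length (subcell ts E)" and m: "m \<in> {i, j}"
  let ?k = "sorted_list_of_set E ! k"
  have k': "k < card E"
    using k subcell_length[OF E] by simp
  then have "?k \<in> E"
    by (rule subcell_index[OF E])
  then have "?k < d"
    using E by auto
  with \<open>?k \<in> E\<close> have "s_of ts ?k ` (s_prod ts M \<circ> w0) ` {1..m} \<noteq> (s_prod ts M \<circ> w0) ` {1..m}"
    using sep subcell_index[OF E k'(1)] m separates_iff_not_preserved transposition_in by auto
  then show "transpose (fst (subcell ts E ! k)) (snd (subcell ts E ! k)) ` (s_prod ts M \<circ> w0) ` {1..m}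
      \<noteq> (s_prod ts M \<circ> w0) ` {1..m}"
    unfolding subcell_nth[OF E k'(1)] s_of_def a_of_def b_of_def .
qed

lemma pl_plain_no_blocks: "pl_plain n t ts gs {} v = e_w n t v"
  unfolding pl_block_def e_w_def std_basis_def block_prod_def mat_id_def by simp

lemma pl_sigma_no_blocks:
  assumes "inj v"
  shows "pl_sigma n q i j ts gs {} v T = q ^ (j - i) * e_w n j v T"
proof -
  have "pl_sigma n q i j ts gs {} v T = wedge n j (\<lambda>m r. sigma_diag q i v (v m) * std_basis (v m) r) T"
    unfolding pl_block_def std_basis_def block_prod_def mat_id_def by (rule wedge_cong) simp
  also have "\<dots> = (\<Prod>m\<in>{1..j}. sigma_diag q i v (v m)) * e_w n j v T"
    unfolding e_w_def by (rule wedge_scale)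
  also have "(\<Prod>m\<in>{1..j}. sigma_diag q i v (v m)) = (\<Prod>m\<in>{1..j}. if m \<le> i then 1 else q)"
    using inj_image_mem_iff[OF assms] by (intro prod.cong) (auto simp: sigma_diag_def)
  finally show ?thesis
    using prod_if_le_eq_power[where j = j and i = i and q = q] by simp
qed

lemma cell_tensor_no_blocks:
  assumes E: "E \<subseteq> {0..<d}" and w: "inj w"
  shows "cell_tensor n q i j ts gs E {} w = (\<lambda>ST. q ^ (j - i) * e_C n q i j (subcell ts E) w ST)"
proof
  fix ST :: "nat set \<times> nat set"
  obtain S T where ST: "ST = (S, T)"
    by (cases ST)
  have "inj (s_prod ts L \<circ> w)" if "L \<subseteq> E" for L
    using inj_s_prod_comp[OF _ w, of L] that E by auto
  then show "cell_tensor n q i j ts gs E {} w ST = q ^ (j - i) * e_C n q i j (subcell ts E) w ST"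
    unfolding ST cell_tensor_def e_C_subcell[OF E]
    by (simp add: pl_plain_no_blocks pl_sigma_no_blocks sum_distrib_left algebra_simps)
qed


lemma separates_s_prod_insert:
  assumes "M \<subseteq> {0..<d}" "k < d" "k \<notin> M" "l < d" "l \<noteq> k"
  shows "separates ts l (s_prod ts (insert k M) \<circ> w) t \<longleftrightarrow> separates ts l (s_prod ts M \<circ> w) t"
  using s_prod_insert[OF assms(1-3)] s_prod_singleton[OF assms(2)]
    separates_s_prod_comp[of "{k}" l "s_prod ts M \<circ> w" t] assms(2,4,5)
  by (simp add: o_assoc)

lemma cell_tensor_no_blocks_in_span_e_C:
  assumes mono: "monogressive n ts w0" and E: "E \<subseteq> {0..<d}" and M: "M \<subseteq> {0..<d}" "M \<inter> E = {}"
    and sep: "\<forall>k\<in>E. separates ts k (s_prod ts M \<circ> w0) i \<and> separates ts k (s_prod ts M \<circ> w0) j"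
  shows "cell_tensor n q i j ts gs E {} (s_prod ts M \<circ> w0) \<in> cspan {e_C n q i j ts' w | ts' w. ij_effective n i j ts' w}"
proof -
  have w: "inj (s_prod ts M \<circ> w0)"
    using inj_s_prod_comp[OF M(1) permutes_inj[OF monogressiveD(1)[OF mono]]] .
  have "ij_effective n i j (subcell ts E) (s_prod ts M \<circ> w0)"
    using M(2) by (intro ij_effective_subcell[OF mono E M(1) _ sep]) blast
  then show ?thesis
    unfolding cell_tensor_no_blocks[OF E w] by (blast intro: cspan_scale cspan_base)
qed

lemma cell_tensor_in_span_e_C:
  assumes mono: "monogressive n ts w0" and gs: "block_factors n ts gs" and "q \<noteq> 0"
    and "K \<subseteq> {0..<d}" "E \<subseteq> {0..<d}" "M \<subseteq> {0..<d}" "E \<inter> K = {}" "M \<inter> (E \<union> K) = {}"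
    and "\<forall>k\<in>E. separates ts k (s_prod ts M \<circ> w0) i \<and> separates ts k (s_prod ts M \<circ> w0) j"
  shows "cell_tensor n q i j ts gs E K (s_prod ts M \<circ> w0) \<in> cspan {e_C n q i j ts' w | ts' w. ij_effective n i j ts' w}"
  using assms(4-)
proof (induction K arbitrary: E M rule: infinite_finite_induct)
  case (infinite K)
  then show ?case
    using finite_subset by blast
next
  case empty
  then show ?case
    using cell_tensor_no_blocks_in_span_e_C[OF mono, where E = E and M = M and q = q and i = i and j = j and gs = gs]
    by (auto simp: comp_def)
next
  case (insert k K)
  let ?T = "cspan {e_C n q i j ts' w | ts' w. ij_effective n i j ts' w}"
  let ?w = "s_prod ts M \<circ> w0"
  have k: "k < d" "k \<notin> K" "k \<notin> E" "k \<notin> M" and K: "K \<subseteq> {0..<d}"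
    using insert by auto
  have w: "inj ?w"
    using inj_s_prod_comp[OF insert.prems(3) permutes_inj[OF monogressiveD(1)[OF mono]]] .
  have unchanged: "cell_tensor n q i j ts gs E K ?w \<in> ?T"
    using insert by (intro insert.IH) auto
  have swapped: "cell_tensor n q i j ts gs E K (s_of ts k \<circ> ?w) \<in> ?T"
  proof -
    have "separates ts l (s_prod ts (insert k M) \<circ> w0) t \<longleftrightarrow> separates ts l ?w t" if "l \<in> E" for l t
      using that insert.prems(2) k(3) by (intro separates_s_prod_insert[OF insert.prems(3) k(1,4)]) auto
    then have "cell_tensor n q i j ts gs E K (s_prod ts (insert k M) \<circ> w0) \<in> ?T"
      using insert.prems k by (intro insert.IH) (auto simp: comp_def)
    then show ?thesis
      using s_prod_insert[OF insert.prems(3) k(1,4)] by (simp add: o_assoc)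
  qed
  show ?case
  proof (cases "separates ts k ?w i \<and> separates ts k ?w j")
    case True
    then obtain x where "x = a_of ts k \<or> x = b_of ts k" "x \<in> ?w ` {1..i}" "s_of ts k x \<notin> ?w ` {1..i}"
      "x \<in> ?w ` {1..j}" "s_of ts k x \<notin> ?w ` {1..j}"
      using separates_both_obtain[OF k(1)] by blast
    note split = cell_tensor_insert_separating[OF gs K k(1,2) insert.prems(2) k(3) w this]
    have inserted: "cell_tensor n q i j ts gs (insert k E) K ?w \<in> ?T"
      using insert True by (intro insert.IH) (auto simp: comp_def)
    show ?thesis
      unfolding split[abs_def] by (rule cspan_lin_comb3[OF unchanged inserted swapped])
  next
    case False
    with cell_tensor_insert_not_separating_both[OF gs K k(1,2) insert.prems(2) k(3) w \<open>q \<noteq> 0\<close>]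
    obtain c1 c2 where "cell_tensor n q i j ts gs E (insert k K) ?w
        = (\<lambda>ST. c1 * cell_tensor n q i j ts gs E K ?w ST + c2 * cell_tensor n q i j ts gs E K (s_of ts k \<circ> ?w) ST)"
      by blast
    with unchanged swapped have "cell_tensor n q i j ts gs E (insert k K) ?w \<in> ?T"
      by (simp add: cspan_lin_comb2)
    then show ?thesis
      by (simp add: comp_def)
  qed
qed

end

section \<open>Points of E(C) and their image under sigma_i\<close>

lemma sum_mult_mat_id: "finite A \<Longrightarrow> c \<in> A \<Longrightarrow> (\<Sum>l\<in>A. f l * mat_id l c) = f c"
  unfolding mat_id_def by (simp add: if_distrib sum.delta' cong: if_cong)

lemma sum_mat_id_mult: "finite A \<Longrightarrow> (\<Sum>l\<in>A. mat_id r l * f l) = (if r \<in> A then f r else 0)"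
proof -
  assume "finite A"
  have "(\<Sum>l\<in>A. mat_id r l * f l) = (\<Sum>l\<in>A. if r = l then f l else 0)"
    unfolding mat_id_def by (rule sum.cong) auto
  then show ?thesis
    using sum.delta[OF \<open>finite A\<close>, of r f] by (simp add: eq_commute)
qed

lemma mat_mult_perm_mat_col: "w c \<in> {1..n} \<Longrightarrow> mat_mult n F (perm_mat w) r c = F r (w c)"
  unfolding mat_mult_def perm_mat_def by (simp add: sum.delta' if_distrib cong: if_cong)

lemma mat_mult_t_mat_col: "c \<in> {1..n} \<Longrightarrow> mat_mult n F (t_mat q i) r c = F r c * (if c \<le> i then 1 else q)"
  unfolding mat_mult_def t_mat_def by (simp add: sum.delta' if_distrib cong: if_cong)

abbreviation sigma_mat :: "nat \<Rightarrow> complex \<Rightarrow> nat \<Rightarrow> (nat \<Rightarrow> nat) \<Rightarrow> nat \<Rightarrow> nat \<Rightarrow> complex" where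
  "sigma_mat n q i w \<equiv> mat_mult n (mat_mult n (perm_mat w) (t_mat q i)) (perm_mat (inv_into {1..n} w))"

lemma sigma_mat_entry:
  assumes w: "w permutes {1..n}" and c: "c \<in> {1..n}" and i: "i \<le> n"
  shows "sigma_mat n q i w r c = mat_id r c * sigma_diag q i w c"
proof -
  let ?w' = "inv_into {1..n} w"
  have w': "?w' c \<in> {1..n}" "w (?w' c) = c"
    using c inv_into_into[of c w "{1..n}"] f_inv_into_f[of c w "{1..n}"] permutes_image[OF w] by auto
  have "c \<in> w ` {1..i} \<longleftrightarrow> ?w' c \<le> i"
  proof
    assume "c \<in> w ` {1..i}"
    then obtain m where "m \<in> {1..i}" "c = w m"
      by auto
    then show "?w' c \<le> i"
      using inv_into_f_f[OF permutes_inj_on[OF w]] i by fastforce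
  next
    assume "?w' c \<le> i"
    then show "c \<in> w ` {1..i}"
      using w' by (metis atLeastAtMost_iff image_eqI)
  qed
  then have "sigma_diag q i w c = (if ?w' c \<le> i then 1 else q)"
    unfolding sigma_diag_def by simp
  moreover have "sigma_mat n q i w r c = mat_mult n (perm_mat w) (t_mat q i) r (?w' c)"
    by (rule mat_mult_perm_mat_col[where w = ?w', OF w'(1)])
  moreover have "\<dots> = perm_mat w r (?w' c) * (if ?w' c \<le> i then 1 else q)"
    by (rule mat_mult_t_mat_col[OF w'(1)])
  moreover have "perm_mat w r (?w' c) = mat_id r c"
    using w'(2) unfolding perm_mat_def mat_id_def by simp
  ultimately show ?thesis
    by simp
qed

lemma sigma_mat_mult:
  assumes w: "w permutes {1..n}" and r: "r \<in> {1..n}" and i: "i \<le> n"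
  shows "mat_mult n (sigma_mat n q i w) g r m = sigma_diag q i w r * g r m"
proof -
  have "mat_mult n (sigma_mat n q i w) g r m = (\<Sum>l\<in>{1..n}. mat_id r l * (sigma_diag q i w l * g l m))"
    unfolding mat_mult_def[of n "sigma_mat n q i w"]
  proof (rule sum.cong[OF refl])
    fix l assume "l \<in> {1..n}"
    then show "sigma_mat n q i w r l * g l m = mat_id r l * (sigma_diag q i w l * g l m)"
      using sigma_mat_entry[OF w \<open>l \<in> {1..n}\<close> i, of q r] by simp
  qed
  then show ?thesis
    using r by (simp add: sum_mat_id_mult)
qed

lemma disjoint_transpositions_Cons: "disjoint_transpositions n (t # ts) \<Longrightarrow> disjoint_transpositions n ts"
  unfolding disjoint_transpositions_def
  by (metis Suc_less_eq length_Cons nth_Cons_Suc old.nat.inject)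

lemma block_factors_Cons: "block_factors n (t # ts) (g # gs) \<longleftrightarrow> g \<in> L_sub n t \<and> block_factors n ts gs"
  unfolding block_factors_def by (auto simp: All_less_Suc2)

lemma a_of_Cons [simp]: "a_of (t # ts) 0 = fst t" "a_of (t # ts) (Suc k) = a_of ts k"
  and b_of_Cons [simp]: "b_of (t # ts) 0 = snd t" "b_of (t # ts) (Suc k) = b_of ts k"
  by (simp_all add: a_of_def b_of_def)

context transposition_blocks
begin

lemma block_prod_support:
  assumes gs: "block_factors n ts gs" and K: "K \<subseteq> {0..<d}" and "block_prod ts gs K l c \<noteq> 0"
  shows "l = c \<or> (\<exists>k\<in>K. (l = a_of ts k \<or> l = b_of ts k) \<and> (c = a_of ts k \<or> c = b_of ts k))"
proof (cases "\<exists>k\<in>K. c = a_of ts k \<or> c = b_of ts k")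
  case True
  then obtain k where k: "k \<in> K" "c = a_of ts k \<or> c = b_of ts k"
    by blast
  have "k < d"
    using k K by auto
  have "(gs ! k) l c \<noteq> 0"
    using assms(3) block_prod_col_in[OF K k] by simp
  then have "l = a_of ts k \<or> l = b_of ts k"
    using L_sub_col_in[OF block_factorsD[OF gs \<open>k < d\<close>], of c l] k(2) by blast
  with k show ?thesis
    by blast
next
  case False
  then show ?thesis
    using assms(3) block_prod_col_out[of K c] by (auto simp: mat_id_def split: if_splits)
qed

end

lemma block_prod_Cons:
  assumes "disjoint_transpositions n (t # ts)"
  shows "block_prod (t # ts) (g # gs) {0..<Suc (length ts)} r c
      = (if c = fst t \<or> c = snd t then g r c else block_prod ts gs {0..<length ts} r c)"
proof -
  interpret B: transposition_blocks n "t # ts"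
    by (rule transposition_blocks.intro[OF assms])
  interpret B': transposition_blocks n ts
    by (rule transposition_blocks.intro[OF disjoint_transpositions_Cons[OF assms]])
  consider (head) "c = fst t \<or> c = snd t"
    | (tail) k where "\<not> (c = fst t \<or> c = snd t)" "k < length ts" "c = a_of ts k \<or> c = b_of ts k"
    | (none) "\<not> (c = fst t \<or> c = snd t)" "\<forall>k<length ts. c \<noteq> a_of ts k \<and> c \<noteq> b_of ts k"
    by blast
  then show ?thesis
  proof cases
    case head
    then show ?thesis
      using B.block_prod_col_in[of _ 0 c "g # gs" r] by simp
  next
    case (tail k)
    then show ?thesis
      using B'.block_prod_col_in[of _ k] B.block_prod_col_in[of _ "Suc k"] by simp
  next
    case none
    then have "\<forall>k\<in>{0..<Suc (length ts)}. c \<noteq> a_of (t # ts) k \<and> c \<noteq> b_of (t # ts) k"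
      by (metis atLeastLessThan_iff a_of_Cons b_of_Cons less_Suc_eq_0_disj)
    with none show ?thesis
      using B.block_prod_col_out B'.block_prod_col_out by simp
  qed
qed

lemma mat_mult_L_sub_col_in:
  assumes "c = a \<or> c = b" "c \<in> {1..n}" "\<And>l. P l c = mat_id l c"
  shows "mat_mult n g P r c = g r c"
  using assms sum_mult_mat_id[of "{1..n}" c "g r"] unfolding mat_mult_def by simp

lemma mat_mult_L_sub_col_out:
  assumes g: "g \<in> L_sub n (a, b)" and P: "\<And>l. P l c \<noteq> 0 \<Longrightarrow> l \<in> {1..n} \<and> l \<noteq> a \<and> l \<noteq> b"
  shows "mat_mult n g P r c = P r c"
proof -
  have eq: "g r l * P l c = mat_id r l * P l c" for l
    using P[of l] L_sub_col_out[OF g, of l r] by (cases "P l c = 0") auto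
  have "mat_mult n g P r c = (\<Sum>l\<in>{1..n}. mat_id r l * P l c)"
    unfolding mat_mult_def by (simp only: eq)
  also have "\<dots> = P r c"
    using P by (auto simp: sum_mat_id_mult)
  finally show ?thesis .
qed

lemma foldr_mat_mult_block_factors:
  "disjoint_transpositions n ts \<Longrightarrow> block_factors n ts gs \<Longrightarrow> c \<in> {1..n}
    \<Longrightarrow> foldr (mat_mult n) gs mat_id r c = block_prod ts gs {0..<length ts} r c"
proof (induction gs arbitrary: ts r)
  case Nil
  then show ?case
    by (simp add: block_factors_def block_prod_def)
next
  case (Cons g gs)
  obtain t ts' where ts: "ts = t # ts'"
    using Cons.prems(2) by (cases ts) (auto simp: block_factors_def)
  interpret B: transposition_blocks n ts
    by (rule transposition_blocks.intro[OF Cons.prems(1)])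
  interpret B': transposition_blocks n ts'
    by (rule transposition_blocks.intro[OF disjoint_transpositions_Cons[OF Cons.prems(1)[unfolded ts]]])
  have g: "g \<in> L_sub n (fst t, snd t)" and gs: "block_factors n ts' gs"
    using Cons.prems(2) unfolding ts block_factors_Cons by auto
  have IH: "foldr (mat_mult n) gs mat_id l c = block_prod ts' gs {0..<length ts'} l c" for l
    using Cons.IH[OF disjoint_transpositions_Cons[OF Cons.prems(1)[unfolded ts]] gs Cons.prems(3)] .
  have head_not_tail: "x \<noteq> a_of ts' k \<and> x \<noteq> b_of ts' k" if "x = fst t \<or> x = snd t" "k < length ts'" for x k
    using B.transpositions_disjoint[of 0 "Suc k"] that unfolding ts by auto
  show ?case
  proof (cases "c = fst t \<or> c = snd t")
    case True
    then have "foldr (mat_mult n) (g # gs) mat_id r c = g r c"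
      using IH B'.block_prod_col_out head_not_tail Cons.prems(3)
      by (simp, intro mat_mult_L_sub_col_in) auto
    also have "\<dots> = block_prod ts (g # gs) {0..<length ts} r c"
      using block_prod_Cons[OF Cons.prems(1)[unfolded ts]] True unfolding ts by simp
    finally show ?thesis .
  next
    case False
    have support: "l \<in> {1..n} \<and> l \<noteq> fst t \<and> l \<noteq> snd t"
      if "block_prod ts' gs {0..<length ts'} l c \<noteq> 0" for l
      using B'.block_prod_support[OF gs _ that] B'.transposition_in head_not_tail False Cons.prems(3)
      by fastforce
    have "foldr (mat_mult n) (g # gs) mat_id r c = mat_mult n g (foldr (mat_mult n) gs mat_id) r c"
      by simp
    also have "\<dots> = foldr (mat_mult n) gs mat_id r c"
      by (rule mat_mult_L_sub_col_out[OF g]) (use support IH in simp)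
    also have "\<dots> = block_prod ts' gs {0..<length ts'} r c"
      by (rule IH)
    also have "\<dots> = block_prod ts (g # gs) {0..<length ts} r c"
      using block_prod_Cons[OF Cons.prems(1)[unfolded ts]] False unfolding ts by simp
    finally show ?thesis .
  qed
qed

lemma pl_vec_E_rep:
  assumes ts: "disjoint_transpositions n ts" and gs: "block_factors n ts gs" and w: "w permutes {1..n}"
    and "t \<le> n" "i \<le> n"
  shows "pl_vec n t (mat_mult n (foldr (mat_mult n) gs mat_id) (perm_mat w)) = pl_plain n t ts gs {0..<length ts} w"
    and "pl_vec n t (mat_mult n (sigma_mat n q i w) (mat_mult n (foldr (mat_mult n) gs mat_id) (perm_mat w)))
      = pl_block n t (sigma_diag q i w) ts gs {0..<length ts} w"
proof -
  have col: "mat_mult n (foldr (mat_mult n) gs mat_id) (perm_mat w) r m = block_prod ts gs {0..<length ts} r (w m)"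
    if "m \<in> {1..t}" for r m
  proof -
    have "w m \<in> {1..n}"
      using that \<open>t \<le> n\<close> permutes_in_image[OF w] by auto
    then show ?thesis
      using mat_mult_perm_mat_col foldr_mat_mult_block_factors[OF ts gs] by simp
  qed
  show "pl_vec n t (mat_mult n (foldr (mat_mult n) gs mat_id) (perm_mat w)) = pl_plain n t ts gs {0..<length ts} w"
    unfolding pl_vec_def pl_block_def by (intro ext wedge_cong) (simp add: col)
  show "pl_vec n t (mat_mult n (sigma_mat n q i w) (mat_mult n (foldr (mat_mult n) gs mat_id) (perm_mat w)))
      = pl_block n t (sigma_diag q i w) ts gs {0..<length ts} w"
    unfolding pl_vec_def pl_block_def
    by (intro ext wedge_cong) (use sigma_mat_mult[OF w _ \<open>i \<le> n\<close>] col in simp)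
qed

lemma V_ij_generator_eq_cell_tensor:
  assumes "monogressive n ts w" "block_factors n ts gs" "i \<le> n" "j \<le> n"
    and g: "g = mat_mult n (foldr (mat_mult n) gs mat_id) (perm_mat w)"
  shows "tensor (\<lambda>S. a * pl_vec n i g S) (\<lambda>T. b * pl_vec n j (mat_mult n (sigma_mat n q i w) g) T)
    = (\<lambda>ST. a * b * cell_tensor n q i j ts gs {} {0..<length ts} w ST)"
  using pl_vec_E_rep[OF monogressiveD(2)[OF assms(1)] assms(2) monogressiveD(1)[OF assms(1)]] assms(3,4)
  unfolding g tensor_def cell_tensor_def by (auto simp: fun_eq_iff)

lemma V_ij_subset_span_e_C:
  assumes "q \<noteq> 0" "i \<le> n" "j \<le> n"
  shows "V_ij n q i j \<subseteq> cspan {e_C n q i j ts w | ts w. ij_effective n i j ts w}"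
  unfolding V_ij_def cspan_eq
proof (rule cfun.span_minimal[OF subsetI cfun.subspace_span])
  fix x assume "x \<in> {tensor u v | u v. \<exists>ts w g a b. monogressive n ts w \<and> g \<in> E_reps n ts w \<and> a \<noteq> 0 \<and> b \<noteq> 0
      \<and> u = (\<lambda>S. a * pl_vec n i g S) \<and> v = (\<lambda>T. b * pl_vec n j (mat_mult n (sigma_mat n q i w) g) T)}"
  then obtain ts w g a b where mono: "monogressive n ts w" and "g \<in> E_reps n ts w"
    and x: "x = tensor (\<lambda>S. a * pl_vec n i g S) (\<lambda>T. b * pl_vec n j (mat_mult n (sigma_mat n q i w) g) T)"
    by blast
  then obtain gs where g: "g = mat_mult n (foldr (mat_mult n) gs mat_id) (perm_mat w)" and gs: "block_factors n ts gs"
    unfolding E_reps_def block_factors_def by blast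
  interpret transposition_blocks n ts
    by (rule transposition_blocks.intro[OF monogressiveD(2)[OF mono]])
  have "cell_tensor n q i j ts gs {} {0..<d} (s_prod ts {} \<circ> w) \<in> cspan {e_C n q i j ts w | ts w. ij_effective n i j ts w}"
    by (rule cell_tensor_in_span_e_C[OF mono gs \<open>q \<noteq> 0\<close>]) auto
  then show "x \<in> cfun.span {e_C n q i j ts w | ts w. ij_effective n i j ts w}"
    unfolding x V_ij_generator_eq_cell_tensor[OF mono gs assms(2,3) g] cspan_eq[symmetric]
    by (simp add: cspan_scale)
qed

section \<open>The vectors e_C lie in V^ij\<close>

lemma cell_tensor_all_blocks_in_V_ij:
  assumes mono: "monogressive n ts w" and gs: "block_factors n ts gs" and "i \<le> n" "j \<le> n"
  shows "cell_tensor n q i j ts gs {} {0..<length ts} w \<in> V_ij n q i j"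
proof -
  define g where "g = mat_mult n (foldr (mat_mult n) gs mat_id) (perm_mat w)"
  have "g \<in> E_reps n ts w"
    using gs unfolding g_def E_reps_def block_factors_def by blast
  with mono have "\<exists>ts' w' g' a b. monogressive n ts' w' \<and> g' \<in> E_reps n ts' w' \<and> a \<noteq> 0 \<and> b \<noteq> 0
      \<and> (\<lambda>S. 1 * pl_vec n i g S) = (\<lambda>S. a * pl_vec n i g' S)
      \<and> (\<lambda>T. 1 * pl_vec n j (mat_mult n (sigma_mat n q i w) g) T)
        = (\<lambda>T. b * pl_vec n j (mat_mult n (sigma_mat n q i w') g') T)"
    by (intro exI[where x = ts] exI[where x = w] exI[where x = g] exI[where x = 1]) simp
  then have "tensor (\<lambda>S. 1 * pl_vec n i g S) (\<lambda>T. 1 * pl_vec n j (mat_mult n (sigma_mat n q i w) g) T)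
      \<in> V_ij n q i j"
    unfolding V_ij_def by (intro cspan_base) blast
  then show ?thesis
    using V_ij_generator_eq_cell_tensor[OF mono gs assms(3,4) g_def, of 1 1] by simp
qed

lemma block_prod_list_update: "k \<notin> K \<Longrightarrow> block_prod ts (gs[k := G]) K = block_prod ts gs K"
proof (intro ext)
  fix r c assume "k \<notin> K"
  show "block_prod ts (gs[k := G]) K r c = block_prod ts gs K r c"
  proof (cases "\<exists>l\<in>K. c = a_of ts l \<or> c = b_of ts l")
    case True
    let ?l = "SOME l. l \<in> K \<and> (c = a_of ts l \<or> c = b_of ts l)"
    have "?l \<in> K"
      using someI_ex[of "\<lambda>l. l \<in> K \<and> (c = a_of ts l \<or> c = b_of ts l)"] True by blast
    then have "k \<noteq> ?l"
      using \<open>k \<notin> K\<close> by blast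
    with True show ?thesis
      unfolding block_prod_def by simp
  qed (simp add: block_prod_def)
qed

lemma cell_tensor_list_update:
  "k \<notin> K \<Longrightarrow> cell_tensor n q i j ts (gs[k := G]) E K w = cell_tensor n q i j ts gs E K w"
  unfolding cell_tensor_def pl_block_def block_prod_list_update by simp

definition transvection :: "nat \<Rightarrow> nat \<Rightarrow> complex \<Rightarrow> nat \<Rightarrow> nat \<Rightarrow> complex" where
  "transvection x y s = (\<lambda>r c. mat_id r c + (if r = y \<and> c = x then s else 0))"

lemma transvection_in_L_sub: "x \<noteq> y \<Longrightarrow> {x, y} = {a, b} \<Longrightarrow> transvection x y s \<in> L_sub n (a, b)"
  unfolding L_sub_def transvection_def mat_id_def by (auto simp: doubleton_eq_iff)

context transposition_blocks
begin

lemma block_factors_update: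
  assumes gs: "block_factors n ts gs" and "k < d" and "G \<in> L_sub n (a_of ts k, b_of ts k)"
  shows "block_factors n ts (gs[k := G])"
  using assms unfolding block_factors_def a_of_def b_of_def by (simp add: nth_list_update)

lemma block_factors_transvection:
  assumes gs: "block_factors n ts gs" and "k < d" and "x = a_of ts k \<or> x = b_of ts k"
  shows "block_factors n ts (gs[k := transvection x (s_of ts k x) s])"
proof -
  have "x \<noteq> s_of ts k x" "{x, s_of ts k x} = {a_of ts k, b_of ts k}"
    using assms(3) transposition_in[OF assms(2)] by auto
  then show ?thesis
    using block_factors_update[OF gs assms(2) transvection_in_L_sub] by blast
qed

lemma cell_tensor_transvection:
  assumes gs: "block_factors n ts gs" and K: "K \<subseteq> {0..<d}" "k < d" "k \<notin> K"
    and E: "E \<subseteq> {0..<d}" "k \<notin> E" and w: "inj w"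
    and x: "x = a_of ts k \<or> x = b_of ts k" "x \<in> w ` {1..i}" "s_of ts k x \<notin> w ` {1..i}"
      "x \<in> w ` {1..j}" "s_of ts k x \<notin> w ` {1..j}"
  shows "cell_tensor n q i j ts (gs[k := transvection x (s_of ts k x) s]) E (insert k K) w ST
      = cell_tensor n q i j ts gs E K w ST + s * cell_tensor n q i j ts gs (insert k E) K w ST
        + q * s\<^sup>2 * cell_tensor n q i j ts gs E K (s_of ts k \<circ> w) ST"
proof -
  have "x \<noteq> s_of ts k x"
    using x(1) transposition_in[OF K(2)] by auto
  moreover have "gs[k := transvection x (s_of ts k x) s] ! k = transvection x (s_of ts k x) s"
    using gs K(2) unfolding block_factors_def by simp
  ultimately show ?thesis
    using cell_tensor_insert_separating[OF block_factors_transvection[OF gs K(2) x(1)] K E w x, where q = q]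
    unfolding cell_tensor_list_update[OF K(3)]
    by (simp add: transvection_def mat_id_def)
qed

lemma cell_tensor_in_V_ij:
  assumes mono: "monogressive n ts w0" and sep: "\<forall>k<d. separates ts k w0 i \<and> separates ts k w0 j"
    and "i \<le> n" "j \<le> n" and "E \<subseteq> {0..<d}" and "block_factors n ts gs"
  shows "cell_tensor n q i j ts gs E ({0..<d} - E) w0 \<in> V_ij n q i j"
  using assms(5,6)
proof (induction E arbitrary: gs rule: infinite_finite_induct)
  case (infinite E)
  then show ?case
    using finite_subset by blast
next
  case empty
  then show ?case
    using cell_tensor_all_blocks_in_V_ij[OF mono _ assms(3,4)] by simp
next
  case (insert k E)
  let ?K = "{0..<d} - insert k E" and ?s = "s_of ts k"
  have k: "k < d" "k \<notin> E" "k \<notin> ?K" and E: "E \<subseteq> {0..<d}"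
    using insert by auto
  have w0: "inj w0"
    using permutes_inj[OF monogressiveD(1)[OF mono]] .
  obtain x where x: "x = a_of ts k \<or> x = b_of ts k" "x \<in> w0 ` {1..i}" "?s x \<notin> w0 ` {1..i}"
    "x \<in> w0 ` {1..j}" "?s x \<notin> w0 ` {1..j}"
    using separates_both_obtain[OF k(1)] sep k(1) by blast
  define gs' where "gs' s = gs[k := transvection x (?s x) s]" for s
  have expand: "cell_tensor n q i j ts (gs' s) E ({0..<d} - E) w0 ST
      = cell_tensor n q i j ts gs E ?K w0 ST + s * cell_tensor n q i j ts gs (insert k E) ?K w0 ST
        + q * s\<^sup>2 * cell_tensor n q i j ts gs E ?K (?s \<circ> w0) ST" for s ST
  proof -
    have "{0..<d} - E = insert k ?K"
      using k by auto
    then show ?thesis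
      unfolding gs'_def by (simp only:) (rule cell_tensor_transvection[OF insert.prems(2) _ k(1,3) E k(2) w0 x], auto)
  qed
  have "cell_tensor n q i j ts gs (insert k E) ?K w0
      = (\<lambda>ST. (1/2) * cell_tensor n q i j ts (gs' 1) E ({0..<d} - E) w0 ST
            + (-1/2) * cell_tensor n q i j ts (gs' (-1)) E ({0..<d} - E) w0 ST)"
    unfolding expand by (simp add: fun_eq_iff field_simps)
  also have "\<dots> \<in> V_ij n q i j"
    unfolding V_ij_def gs'_def
    by (intro cspan_lin_comb2 insert.IH[unfolded V_ij_def] block_factors_transvection[OF insert.prems(2) k(1) x(1)] E)
  finally show ?case .
qed

end

lemma e_C_in_V_ij:
  assumes eff: "ij_effective n i j ts w" and "q \<noteq> 0" "i \<le> n" "j \<le> n"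
  shows "e_C n q i j ts w \<in> V_ij n q i j"
proof -
  have mono: "monogressive n ts w"
    using eff unfolding ij_effective_def by blast
  interpret transposition_blocks n ts
    by (rule transposition_blocks.intro[OF monogressiveD(2)[OF mono]])
  have sep: "\<forall>k<d. separates ts k w i \<and> separates ts k w j"
    using eff transposition_in separates_iff_not_preserved unfolding ij_effective_def s_of_def a_of_def b_of_def
    by auto
  have gs: "block_factors n ts (replicate d mat_id)"
    using transposition_in unfolding block_factors_def L_sub_def mat_id_def a_of_def b_of_def
    by (auto simp: split_beta)
  have "subcell ts {0..<d} = ts"
    unfolding subcell_def by (simp add: map_nth)
  then have "e_C n q i j ts w = (\<lambda>ST. (1 / q ^ (j - i)) * cell_tensor n q i j ts (replicate d mat_id) {0..<d} {} w ST)"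
    using cell_tensor_no_blocks[OF subset_refl permutes_inj[OF monogressiveD(1)[OF mono]]] \<open>q \<noteq> 0\<close>
    by (simp add: fun_eq_iff)
  also have "\<dots> \<in> V_ij n q i j"
  proof -
    have "cell_tensor n q i j ts (replicate d mat_id) {0..<d} {} w \<in> V_ij n q i j"
      using cell_tensor_in_V_ij[OF mono sep assms(3,4) subset_refl gs] by simp
    then show ?thesis
      unfolding V_ij_def by (rule cspan_scale)
  qed
  finally show ?thesis .
qed

lemma V_ij_subspace: "cfun.subspace (V_ij n q i j)"
  unfolding V_ij_def cspan_eq by (rule cfun.subspace_span)

lemma span_e_C_subset_V_ij:
  assumes "q \<noteq> 0" "i \<le> n" "j \<le> n"
  shows "cspan {e_C n q i j ts w | ts w. ij_effective n i j ts w} \<subseteq> V_ij n q i j"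
  unfolding cspan_eq by (rule cfun.span_minimal[OF _ V_ij_subspace]) (use e_C_in_V_ij assms in blast)

theorem mainTheorem6:
  fixes n i j :: nat and q :: complex
  assumes "n \<ge> 2" and "q \<noteq> 0" and "\<forall>k::nat. k > 0 \<longrightarrow> q ^ k \<noteq> 1"
    and "1 \<le> i" and "i \<le> n - 1" and "1 \<le> j" and "j \<le> n - 1"
  shows "V_ij n q i j = cspan {e_C n q i j ts w | ts w. ij_effective n i j ts w}"
proof -
  have "i \<le> n" "j \<le> n"
    using assms by auto
  then show ?thesis
    using V_ij_subset_span_e_C[OF \<open>q \<noteq> 0\<close>] span_e_C_subset_V_ij[OF \<open>q \<noteq> 0\<close>] by blast
qed

end
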